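(* Let $T_p>0$ and let $f:[0,\infty)\times\mathbb{R}^n\times\mathbb{R}^m\to\mathbb{R}^n$ satisfy: (A1) $f$ is locally Lipschitz continuous in $x$ and $u$, piecewise continuous in $t$, and $f(t+T_p,x,u)=f(t,x,u)$ for all $(t,x,u)$; (A2) $f(t,0,0)=0$ for all $t\ge 0$; (A3) $B\subset\mathbb{R}^n$ is an open ball about the origin and $V:B\to\mathbb{R}$ is positive definite and locally Lipschitz continuous, with constants $0<\alpha_1\le\alpha_2$ such that $\alpha_1 x^\top x\le V(x)\le \alpha_2 x^\top x$ for all $x\in B$; (A4) there is a constant $0\le c<1$ such that for each $\xi\in B$ there exist a continuous input $u_\xi:[0,T_p]\to\mathbb{R}^m$ and a corresponding solution $\varphi_\xi:[0,T_p]\to\mathbb{R}^n$ of $\dot x=f(t,x,u)$, i.e. $\varphi_\xi(t)=\xi+\int_0^t f(\tau,\varphi_\xi(\tau),u_\xi(\tau))\,d\tau$, satisfying $\varphi_\xi(T_p)\in B$ and $V(\varphi_\xi(T_p))\le c\,V(\xi)$; moreover $u_0(t)\equiv 0$. Assume in addition that there exist an open set $B^e\supset B$ and a function $\mu:[0,\infty)\times B^e\to\mathbb{R}^m$ that is piecewise continuous in $t$, $T_p$-periodic in $t$, locally Lipschitz continuous in $x$, and such that $\mu(t,\varphi_\xi(t))=u_\xi(t)$ for all $0\le t<T_p$ and all $\xi\in B$. Then the origin of the closed-loop system $\dot x=f(t,x,\mu(t,x))$ is locally exponentially stable, uniformly in $t$, and the trajectories $\varphi_\xi$, $\xi\in B$,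 from (A4) are solutions of this closed-loop system. *)

theory Defs
  imports "HOL-Analysis.Analysis"
begin

definition pw_continuous_nonneg :: "(real \<Rightarrow> 'c::topological_space) \<Rightarrow> bool" where
  "pw_continuous_nonneg g \<longleftrightarrow>
     (\<forall>T\<ge>0. \<exists>S. finite S \<and> continuous_on ({0..T} - S) g \<and>
        (\<forall>s\<in>S. (0 < s \<longrightarrow> (\<exists>l. (g \<longlongrightarrow> l) (at_left s))) \<and> (\<exists>l. (g \<longlongrightarrow> l) (at_right s))))"

definition loc_lipschitz_in_x :: "'a::metric_space set \<Rightarrow> (real \<Rightarrow> 'a \<Rightarrow> 'c::real_normed_vector) \<Rightarrow> bool" where
  "loc_lipschitz_in_x D g \<longleftrightarrow>
     (\<forall>T\<ge>0. \<forall>x0\<in>D. \<exists>r>0. \<exists>L. \<forall>t\<in>{0..T}. \<forall>x\<in>ball x0 r \<inter> D. \<forall>y\<in>ball x0 r \<inter> D.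
         norm (g t x - g t y) \<le> L * dist x y)"

definition loc_lipschitz_on :: "'a::metric_space set \<Rightarrow> ('a \<Rightarrow> real) \<Rightarrow> bool" where
  "loc_lipschitz_on D V \<longleftrightarrow>
     (\<forall>x0\<in>D. \<exists>r>0. \<exists>L. \<forall>x\<in>ball x0 r \<inter> D. \<forall>y\<in>ball x0 r \<inter> D. \<bar>V x - V y\<bar> \<le> L * dist x y)"

definition cl_solution ::
  "(real \<Rightarrow> 'a::euclidean_space \<Rightarrow> 'b::euclidean_space \<Rightarrow> 'a) \<Rightarrow> (real \<Rightarrow> 'a \<Rightarrow> 'b) \<Rightarrow> 'a set
    \<Rightarrow> (real \<Rightarrow> 'a) \<Rightarrow> real \<Rightarrow> real \<Rightarrow> bool" where
  "cl_solution f \<mu> Be x t0 t1 \<longleftrightarrow>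
     (\<forall>t\<in>{t0..t1}. x t \<in> Be) \<and>
     (\<forall>t\<in>{t0..t1}. ((\<lambda>\<tau>. f \<tau> (x \<tau>) (\<mu> \<tau> (x \<tau>))) has_integral (x t - x t0)) {t0..t})"

definition cl_loc_exp_stable ::
  "(real \<Rightarrow> 'a::euclidean_space \<Rightarrow> 'b::euclidean_space \<Rightarrow> 'a) \<Rightarrow> (real \<Rightarrow> 'a \<Rightarrow> 'b) \<Rightarrow> 'a set \<Rightarrow> bool" where
  "cl_loc_exp_stable f \<mu> Be \<longleftrightarrow>
     (\<exists>\<delta>>0. \<exists>k>0. \<exists>lam>0. \<forall>t0\<ge>0.
        (\<forall>x0. norm x0 < \<delta> \<longrightarrow> (\<exists>x. x t0 = x0 \<and> (\<forall>t1\<ge>t0. cl_solution f \<mu> Be x t0 t1))) \<and>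
        (\<forall>x t1. cl_solution f \<mu> Be x t0 t1 \<and> norm (x t0) < \<delta> \<longrightarrow>
            (\<forall>t\<in>{t0..t1}. norm (x t) \<le> k * norm (x t0) * exp (- lam * (t - t0)))))"

end

(* Closed-loop solutions that start at a sampling instant m Tp close enough to the origin stay in
   a ball where the closed-loop field is Lipschitz, so by uniqueness (Gronwall) they coincide on each
   period with the open-loop trajectories of (A4). Hence V contracts by the factor c from one sampling
   instant to the next, which by the quadratic bounds on V means geometric decay of the state at the
   sampling instants; within a period Gronwall bounds the growth by the factor exp (L Tp). Existence
   comes from Picard iteration up to the first sampling instant, followed by the concatenation of the
   trajectories of (A4). *)

theory Submission
  imports Defs
begin

section \<open>Gronwall's inequality and integral solutions\<close>

lemma gronwall_le_exp:
  fixes g :: "real \<Rightarrow> real"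
  assumes g_cont: "continuous_on {a..b} g" and L: "0 \<le> L"
    and g_le: "\<And>t. t \<in> {a..b} \<Longrightarrow> g t \<le> C + L * integral {a..t} g"
    and t: "t \<in> {a..b}"
  shows "g t \<le> C * exp (L * (t - a))"
proof -
  define h where "h s = C + L * integral {a..s} g" for s
  define k where "k s = exp (- L * (s - a)) * h s" for s
  have "continuous_on {a..b} h"
    unfolding h_def
    by (intro continuous_intros indefinite_integral_continuous_1 integrable_continuous_real g_cont)
  then have k_cont: "continuous_on {a..t} k"
    unfolding k_def using t by (intro continuous_intros) (auto elim: continuous_on_subset)
  have "k t \<le> k a"
  proof (rule DERIV_nonpos_imp_decreasing_open[OF _ _ k_cont])
    show "a \<le> t" using t by auto
    fix s assume s: "a < s" "s < t"
    have "((\<lambda>x. integral {a..x} g) has_real_derivative g s) (at s within {a..b})"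
      using s t by (intro integral_has_real_derivative g_cont) auto
    moreover have "at s within {a..b} = at s" using s t by (intro at_within_Icc_at) auto
    ultimately have "(h has_real_derivative (L * g s)) (at s)"
      unfolding h_def by (auto intro!: derivative_eq_intros)
    then have "(k has_real_derivative (L * exp (- L * (s - a)) * (g s - h s))) (at s)"
      unfolding k_def by (auto intro!: derivative_eq_intros simp: algebra_simps)
    moreover have "g s \<le> h s" unfolding h_def using g_le s t by auto
    ultimately show "\<exists>y. (k has_real_derivative y) (at s) \<and> y \<le> 0"
      using L by (intro exI[of _ "L * exp (- L * (s - a)) * (g s - h s)"])
        (auto simp: mult_nonneg_nonpos)
  qed
  then have "exp (L * (t - a)) * k t \<le> exp (L * (t - a)) * C"
    by (simp add: k_def h_def)
  moreover have "exp (L * (t - a)) * k t = h t"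
    by (simp add: k_def exp_minus_inverse mult.assoc[symmetric] flip: exp_add)
  ultimately show ?thesis using g_le[OF t] unfolding h_def by (simp only: mult.commute)
qed

lemma has_integral_scaled_exp:
  fixes K a t :: real
  assumes "a \<le> t"
  shows "((\<lambda>\<tau>. K * exp (K * (\<tau> - a))) has_integral (exp (K * (t - a)) - 1)) {a..t}"
proof -
  have "((\<lambda>\<tau>. K * exp (K * (\<tau> - a))) has_integral (exp (K * (t - a)) - exp (K * (a - a)))) {a..t}"
    by (rule fundamental_theorem_of_calculus[OF assms])
      (auto intro!: derivative_eq_intros simp: has_real_derivative_iff_has_vector_derivative[symmetric])
  then show ?thesis by simp
qed

lemma integral_tendsto_of_uniform_limit:
  fixes f :: "nat \<Rightarrow> real \<Rightarrow> 'a::banach"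
  assumes lim: "uniform_limit {a..b} f g sequentially"
    and f_int: "\<And>n. f n integrable_on {a..b}" and g_int: "g integrable_on {a..b}"
  shows "(\<lambda>n. integral {a..b} (f n)) \<longlonglongrightarrow> integral {a..b} g"
proof (rule tendstoI)
  fix e :: real assume e: "0 < e"
  define M where "M = \<bar>b - a\<bar> + 1"
  have M: "0 < M" by (simp add: M_def add_nonneg_pos)
  define d where "d = e / (2 * M)"
  have d: "0 < d" using e M by (simp add: d_def)
  show "\<forall>\<^sub>F n in sequentially. dist (integral {a..b} (f n)) (integral {a..b} g) < e"
    using uniform_limitD[OF lim d]
  proof eventually_elim
    case (elim n)
    have "dist (integral {a..b} (f n)) (integral {a..b} g) = norm (integral {a..b} (\<lambda>t. f n t - g t))"
      by (simp add: integral_diff[OF f_int g_int] dist_norm)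
    also have "\<dots> \<le> integral {a..b} (\<lambda>_. d)"
      using elim by (intro integral_norm_bound_integral integrable_diff f_int g_int)
        (auto simp: dist_norm less_imp_le)
    also have "\<dots> \<le> M * d"
      using d by (cases "a \<le> b") (simp_all add: M_def mult_right_mono)
    also have "\<dots> < e" using e M by (simp add: d_def)
    finally show ?case .
  qed
qed

definition integral_solution :: "(real \<Rightarrow> 'a \<Rightarrow> 'a::real_normed_vector) \<Rightarrow> (real \<Rightarrow> 'a) \<Rightarrow> real \<Rightarrow> real \<Rightarrow> bool"
  where "integral_solution G z a b \<longleftrightarrow> (\<forall>t\<in>{a..b}. ((\<lambda>\<tau>. G \<tau> (z \<tau>)) has_integral (z t - z a)) {a..t})"

lemma integral_solution_integrable:
  "integral_solution G z a b \<Longrightarrow> t \<in> {a..b} \<Longrightarrow> (\<lambda>\<tau>. G \<tau> (z \<tau>)) integrable_on {a..t}"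
  unfolding integral_solution_def by blast

lemma integral_solution_eq_integral:
  "integral_solution G z a b \<Longrightarrow> t \<in> {a..b} \<Longrightarrow> z t = z a + integral {a..t} (\<lambda>\<tau>. G \<tau> (z \<tau>))"
  unfolding integral_solution_def by (metis add.commute diff_add_cancel integral_unique)

lemma integral_solution_continuous_on:
  fixes G :: "real \<Rightarrow> 'a \<Rightarrow> 'a::banach"
  assumes sol: "integral_solution G z a b"
  shows "continuous_on {a..b} z"
proof (cases "a \<le> b")
  case True
  have "continuous_on {a..b} (\<lambda>t. z a + integral {a..t} (\<lambda>\<tau>. G \<tau> (z \<tau>)))"
    using True by (intro continuous_intros indefinite_integral_continuous_1
        integral_solution_integrable[OF sol]) auto
  then show ?thesis
    by (rule continuous_on_eq) (simp add: integral_solution_eq_integral[OF sol, symmetric])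
qed simp

lemma integral_solution_subinterval:
  fixes G :: "real \<Rightarrow> 'a \<Rightarrow> 'a::banach"
  assumes sol: "integral_solution G z a b" and "a \<le> c" "c \<le> d" "d \<le> b"
  shows "integral_solution G z c d"
  unfolding integral_solution_def
proof
  fix t assume t: "t \<in> {c..d}"
  have int: "(\<lambda>\<tau>. G \<tau> (z \<tau>)) integrable_on {a..t}"
    using assms t by (intro integral_solution_integrable[OF sol]) auto
  have "integral {a..c} (\<lambda>\<tau>. G \<tau> (z \<tau>)) + integral {c..t} (\<lambda>\<tau>. G \<tau> (z \<tau>))
      = integral {a..t} (\<lambda>\<tau>. G \<tau> (z \<tau>))"
    using assms t int by (intro Henstock_Kurzweil_Integration.integral_combine) auto
  moreover have "z c = z a + integral {a..c} (\<lambda>\<tau>. G \<tau> (z \<tau>))"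
    using assms by (intro integral_solution_eq_integral[OF sol]) auto
  moreover have "z t = z a + integral {a..t} (\<lambda>\<tau>. G \<tau> (z \<tau>))"
    using assms t by (intro integral_solution_eq_integral[OF sol]) auto
  moreover have "(\<lambda>\<tau>. G \<tau> (z \<tau>)) integrable_on {c..t}"
    using t assms by (intro integrable_on_subinterval[OF int]) auto
  ultimately show "((\<lambda>\<tau>. G \<tau> (z \<tau>)) has_integral (z t - z c)) {c..t}"
    by (simp add: has_integral_integrable_integral algebra_simps)
qed

lemma integral_solution_append:
  fixes G :: "real \<Rightarrow> 'a \<Rightarrow> 'a::banach"
  assumes sol1: "integral_solution G z a b" and sol2: "integral_solution G z b c" and "a \<le> b"
  shows "integral_solution G z a c"
  unfolding integral_solution_def
proof
  fix t assume t: "t \<in> {a..c}"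
  show "((\<lambda>\<tau>. G \<tau> (z \<tau>)) has_integral (z t - z a)) {a..t}"
  proof (cases "t \<le> b")
    case True then show ?thesis using sol1 t by (auto simp: integral_solution_def)
  next
    case False
    have "((\<lambda>\<tau>. G \<tau> (z \<tau>)) has_integral (z b - z a)) {a..b}"
      using sol1 \<open>a \<le> b\<close> by (auto simp: integral_solution_def)
    moreover have "((\<lambda>\<tau>. G \<tau> (z \<tau>)) has_integral (z t - z b)) {b..t}"
      using sol2 t False by (auto simp: integral_solution_def)
    ultimately have "((\<lambda>\<tau>. G \<tau> (z \<tau>)) has_integral ((z b - z a) + (z t - z b))) {a..t}"
      by (rule has_integral_combine[rotated 2]) (use \<open>a \<le> b\<close> False in auto)
    then show ?thesis by simp
  qed
qed

lemma integral_solution_cong: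
  assumes sol: "integral_solution G z a b"
    and z: "\<And>t. t \<in> {a..b} \<Longrightarrow> z' t = z t"
    and G: "\<And>t. t \<in> {a..b} \<Longrightarrow> G' t (z t) = G t (z t)"
  shows "integral_solution G' z' a b"
  unfolding integral_solution_def
proof
  fix t assume t: "t \<in> {a..b}"
  have "((\<lambda>\<tau>. G \<tau> (z \<tau>)) has_integral (z t - z a)) {a..t}"
    using sol t by (auto simp: integral_solution_def)
  then have "((\<lambda>\<tau>. G' \<tau> (z' \<tau>)) has_integral (z t - z a)) {a..t}"
    by (rule has_integral_spike_finite[where S = "{}", rotated 2]) (use t z G in auto)
  then show "((\<lambda>\<tau>. G' \<tau> (z' \<tau>)) has_integral (z' t - z' a)) {a..t}"
    using z[of t] z[of a] t by auto
qed

lemma integral_solution_shift: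
  assumes "integral_solution G z a b"
  shows "integral_solution (\<lambda>t. G (t + c)) (\<lambda>t. z (t + c)) (a - c) (b - c)"
  unfolding integral_solution_def
proof
  fix t assume t: "t \<in> {a - c..b - c}"
  have "((\<lambda>\<tau>. G \<tau> (z \<tau>)) has_integral (z (t + c) - z a)) {(a - c) + c..t + c}"
    using assms t by (auto simp: integral_solution_def)
  then have "(((\<lambda>\<tau>. G \<tau> (z \<tau>)) \<circ> (+) c) has_integral (z (t + c) - z a)) {a - c..t}"
    by (simp only: has_integral_shift_Icc_real)
  then show "((\<lambda>\<tau>. G (\<tau> + c) (z (\<tau> + c))) has_integral (z (t + c) - z (a - c + c))) {a - c..t}"
    by (simp add: o_def add.commute)
qed

lemma integral_solution_norm_le_of_growth:
  fixes G :: "real \<Rightarrow> 'a \<Rightarrow> 'a::banach"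
  assumes sol: "integral_solution G z a b" and L: "0 \<le> L"
    and growth: "\<And>\<tau>. \<tau> \<in> {a..b} \<Longrightarrow> norm (G \<tau> (z \<tau>)) \<le> L * norm (z \<tau>)"
    and t: "t \<in> {a..b}"
  shows "norm (z t) \<le> norm (z a) * exp (L * (t - a))"
proof (rule gronwall_le_exp[OF _ L _ t])
  show z_cont: "continuous_on {a..b} (\<lambda>t. norm (z t))"
    by (intro continuous_intros integral_solution_continuous_on[OF sol])
  fix s assume s: "s \<in> {a..b}"
  have "norm (integral {a..s} (\<lambda>\<tau>. G \<tau> (z \<tau>))) \<le> integral {a..s} (\<lambda>\<tau>. L * norm (z \<tau>))"
    using s growth
    by (intro integral_norm_bound_integral integral_solution_integrable[OF sol s]
        integrable_continuous_real continuous_intros continuous_on_subset[OF z_cont]) auto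
  then show "norm (z s) \<le> norm (z a) + L * integral {a..s} (\<lambda>\<tau>. norm (z \<tau>))"
    using integral_solution_eq_integral[OF sol s]
      norm_triangle_ineq[of "z a" "integral {a..s} (\<lambda>\<tau>. G \<tau> (z \<tau>))"]
    by simp
qed

lemma norm_le_of_lipschitz_zero:
  assumes "L-lipschitz_on S g" "g 0 = 0" "0 \<in> S" "x \<in> S"
  shows "norm (g x) \<le> L * norm x"
  using lipschitz_onD[OF assms(1) assms(4) assms(3)] assms(2) by simp

lemma norm_less_continuation:
  fixes z :: "real \<Rightarrow> 'a::real_normed_vector"
  assumes z_cont: "continuous_on {a..b} z" and start: "norm (z a) < \<rho>"
    and step: "\<And>s. s \<in> {a..b} \<Longrightarrow> (\<And>\<tau>. \<tau> \<in> {a..s} \<Longrightarrow> norm (z \<tau>) \<le> \<rho>) \<Longrightarrow> norm (z s) < \<rho>"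
    and t: "t \<in> {a..b}"
  shows "norm (z t) < \<rho>"
proof -
  define A where "A = {s \<in> {a..b}. \<rho> \<le> norm (z s)}"
  have "A = {}"
  proof (rule ccontr)
    assume "A \<noteq> {}"
    have A_closed: "closed A" unfolding A_def
      by (intro continuous_on_closed_Collect_le continuous_intros z_cont)
    have bdd: "bdd_below A" unfolding A_def by (auto intro: bdd_belowI[where m = a])
    define s0 where "s0 = Inf A"
    have s0A: "s0 \<in> A" unfolding s0_def by (rule closed_contains_Inf[OF \<open>A \<noteq> {}\<close> bdd A_closed])
    have below: "norm (z \<tau>) < \<rho>" if "\<tau> \<in> {a..b}" "\<tau> < s0" for \<tau>
    proof (rule ccontr)
      assume "\<not> ?thesis"
      then have "s0 \<le> \<tau>" unfolding s0_def using that by (intro cInf_lower[OF _ bdd]) (auto simp: A_def)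
      then show False using that by auto
    qed
    have "a < s0" using s0A start by (cases "s0 = a") (auto simp: A_def)
    have "{a..<s0} \<subseteq> {\<tau> \<in> {a..b}. norm (z \<tau>) \<le> \<rho>}"
      using below s0A by (force simp: A_def)
    then have "closure {a..<s0} \<subseteq> {\<tau> \<in> {a..b}. norm (z \<tau>) \<le> \<rho>}"
      by (rule closure_minimal) (intro continuous_on_closed_Collect_le continuous_intros z_cont)
    then have "\<And>\<tau>. \<tau> \<in> {a..s0} \<Longrightarrow> norm (z \<tau>) \<le> \<rho>"
      using \<open>a < s0\<close> by (auto simp: closure_atLeastLessThan)
    then have "norm (z s0) < \<rho>" using s0A by (intro step) (auto simp: A_def)
    with s0A show False by (auto simp: A_def)
  qed
  then show ?thesis using t by (force simp: A_def)
qed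

lemma integral_solution_norm_le_of_lipschitz:
  fixes G :: "real \<Rightarrow> 'a \<Rightarrow> 'a::banach"
  assumes sol: "integral_solution G z a b"
    and lip: "\<And>\<tau>. \<tau> \<in> {a..b} \<Longrightarrow> L-lipschitz_on (cball 0 r) (G \<tau>)"
    and G0: "\<And>\<tau>. \<tau> \<in> {a..b} \<Longrightarrow> G \<tau> 0 = 0"
    and small: "norm (z a) * exp (L * (b - a)) < r"
    and t: "t \<in> {a..b}"
  shows "norm (z t) \<le> norm (z a) * exp (L * (t - a))"
proof -
  have L: "0 \<le> L" using lip[OF t] by (rule lipschitz_on_nonneg)
  have r0: "0 \<le> r" using small by (meson norm_ge_zero exp_ge_zero mult_nonneg_nonneg order_trans less_imp_le)
  have bound: "norm (z s) \<le> norm (z a) * exp (L * (s - a))"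
    if s: "s \<in> {a..b}" and inside: "\<And>\<tau>. \<tau> \<in> {a..s} \<Longrightarrow> norm (z \<tau>) \<le> r" for s
  proof (rule integral_solution_norm_le_of_growth[OF _ L])
    show "integral_solution G z a s" using s by (intro integral_solution_subinterval[OF sol]) auto
    fix \<tau> assume \<tau>: "\<tau> \<in> {a..s}"
    then have \<tau>_ab: "\<tau> \<in> {a..b}" using s by auto
    show "norm (G \<tau> (z \<tau>)) \<le> L * norm (z \<tau>)"
      by (rule norm_le_of_lipschitz_zero[OF lip[OF \<tau>_ab] G0[OF \<tau>_ab]]) (use r0 inside[OF \<tau>] in auto)
  qed (use s in auto)
  have exp_mono: "norm (z a) * exp (L * (s - a)) \<le> norm (z a) * exp (L * (b - a))" if "s \<le> b" for s
  proof -
    have "L * (s - a) \<le> L * (b - a)" using that L by (simp add: mult_left_mono)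
    then show ?thesis by (simp add: mult_left_mono)
  qed
  have "norm (z \<tau>) < r" if "\<tau> \<in> {a..b}" for \<tau>
  proof (rule norm_less_continuation[OF integral_solution_continuous_on[OF sol] _ _ that])
    show "norm (z a) < r" using exp_mono[of a] small t by auto
    fix s assume "s \<in> {a..b}" "\<And>\<tau>. \<tau> \<in> {a..s} \<Longrightarrow> norm (z \<tau>) \<le> r"
    with bound exp_mono[of s] small show "norm (z s) < r" by fastforce
  qed
  then show ?thesis using t by (intro bound) (auto intro: less_imp_le)
qed

lemma integral_solution_unique:
  fixes G :: "real \<Rightarrow> 'a \<Rightarrow> 'a::banach"
  assumes sol1: "integral_solution G z1 a b" and sol2: "integral_solution G z2 a b"
    and lip: "\<And>\<tau>. \<tau> \<in> {a..b} \<Longrightarrow> L-lipschitz_on S (G \<tau>)"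
    and in1: "\<And>\<tau>. \<tau> \<in> {a..b} \<Longrightarrow> z1 \<tau> \<in> S" and in2: "\<And>\<tau>. \<tau> \<in> {a..b} \<Longrightarrow> z2 \<tau> \<in> S"
    and start: "z1 a = z2 a" and t: "t \<in> {a..b}"
  shows "z1 t = z2 t"
proof -
  have L: "0 \<le> L" using lip[OF t] by (rule lipschitz_on_nonneg)
  have cont: "continuous_on {a..b} (\<lambda>t. norm (z1 t - z2 t))"
    by (intro continuous_intros integral_solution_continuous_on[OF sol1]
        integral_solution_continuous_on[OF sol2])
  have "norm (z1 t - z2 t) \<le> 0 * exp (L * (t - a))"
  proof (rule gronwall_le_exp[OF cont L _ t])
    fix s assume s: "s \<in> {a..b}"
    have "z1 s - z2 s = integral {a..s} (\<lambda>\<tau>. G \<tau> (z1 \<tau>) - G \<tau> (z2 \<tau>))"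
      using integral_solution_eq_integral[OF sol1 s] integral_solution_eq_integral[OF sol2 s] start
      by (simp add: integral_diff integral_solution_integrable[OF sol1 s]
          integral_solution_integrable[OF sol2 s])
    also have "norm \<dots> \<le> integral {a..s} (\<lambda>\<tau>. L * norm (z1 \<tau> - z2 \<tau>))"
      using s lipschitz_onD[OF lip in1 in2]
      by (intro integral_norm_bound_integral integrable_diff integrable_continuous_real
          integral_solution_integrable[OF sol1 s] integral_solution_integrable[OF sol2 s]
          continuous_intros continuous_on_subset[OF cont]) (auto simp: dist_norm)
    finally show "norm (z1 s - z2 s) \<le> 0 + L * integral {a..s} (\<lambda>\<tau>. norm (z1 \<tau> - z2 \<tau>))"
      by simp
  qed
  then show ?thesis by simp
qed

section \<open>Existence by Picard iteration\<close>

lemma uniform_limit_compose_lipschitz: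
  assumes lim: "uniform_limit S f g F"
    and lip: "\<And>x. x \<in> S \<Longrightarrow> L-lipschitz_on K (h x)"
    and f_in: "\<forall>\<^sub>F n in F. \<forall>x\<in>S. f n x \<in> K" and g_in: "\<And>x. x \<in> S \<Longrightarrow> g x \<in> K"
  shows "uniform_limit S (\<lambda>n x. h x (f n x)) (\<lambda>x. h x (g x)) F"
proof (rule uniform_limitI)
  fix e :: real assume e: "0 < e"
  define d where "d = e / (\<bar>L\<bar> + 1)"
  have d: "0 < d" using e by (simp add: d_def add_nonneg_pos)
  show "\<forall>\<^sub>F n in F. \<forall>x\<in>S. dist (h x (f n x)) (h x (g x)) < e"
    using uniform_limitD[OF lim d] f_in
  proof eventually_elim
    case (elim n)
    show ?case
    proof
      fix x assume x: "x \<in> S"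
      have "dist (h x (f n x)) (h x (g x)) \<le> L * dist (f n x) (g x)"
        using elim x g_in by (intro lipschitz_onD[OF lip]) auto
      also have "\<dots> \<le> \<bar>L\<bar> * d"
        using elim x by (intro mult_mono) (auto intro: less_imp_le)
      also have "\<dots> < e" using e by (simp add: d_def field_simps)
      finally show "dist (h x (f n x)) (h x (g x)) < e" .
    qed
  qed
qed

primrec picard_iterate :: "(real \<Rightarrow> 'a \<Rightarrow> 'a::banach) \<Rightarrow> real \<Rightarrow> 'a \<Rightarrow> nat \<Rightarrow> real \<Rightarrow> 'a" where
  "picard_iterate G a x0 0 t = x0"
| "picard_iterate G a x0 (Suc n) t = x0 + integral {a..t} (\<lambda>\<tau>. G \<tau> (picard_iterate G a x0 n \<tau>))"

lemma picard_iterate_start: "picard_iterate G a x0 n a = x0"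
  by (cases n) simp_all

context
  fixes G :: "real \<Rightarrow> 'a \<Rightarrow> 'a::banach" and a b L r :: real and x0 :: 'a
  assumes ab: "a \<le> b"
    and lip: "\<And>\<tau>. \<tau> \<in> {a..b} \<Longrightarrow> L-lipschitz_on (cball 0 r) (G \<tau>)"
    and G0: "\<And>\<tau>. \<tau> \<in> {a..b} \<Longrightarrow> G \<tau> 0 = 0"
    and integrable: "\<And>y. continuous_on {a..b} y \<Longrightarrow> (\<And>\<tau>. \<tau> \<in> {a..b} \<Longrightarrow> y \<tau> \<in> cball 0 r)
        \<Longrightarrow> (\<lambda>\<tau>. G \<tau> (y \<tau>)) integrable_on {a..b}"
    and small: "norm x0 * exp (L * (b - a)) \<le> r"
begin

private lemma L_nonneg: "0 \<le> L"
  using lip[of a] ab by (auto intro: lipschitz_on_nonneg)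

private lemma r_nonneg: "0 \<le> r"
  using small by (meson norm_ge_zero exp_ge_zero mult_nonneg_nonneg order_trans)

private lemma tube_subset_cball:
  assumes "t \<in> {a..b}" "norm y \<le> norm x0 * exp (L * (t - a))"
  shows "y \<in> cball 0 r"
proof -
  have "norm x0 * exp (L * (t - a)) \<le> norm x0 * exp (L * (b - a))"
    using assms(1) L_nonneg by (intro mult_left_mono) (auto intro: mult_left_mono)
  then show ?thesis using assms(2) small by simp
qed

private lemma growth_in_tube:
  assumes "t \<in> {a..b}" "norm y \<le> norm x0 * exp (L * (t - a))"
  shows "norm (G t y) \<le> L * norm y"
  using assms tube_subset_cball r_nonneg by (intro norm_le_of_lipschitz_zero[OF lip G0]) auto

lemma picard_iterate_tube:
  "continuous_on {a..b} (picard_iterate G a x0 n) \<and>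
   (\<forall>t\<in>{a..b}. norm (picard_iterate G a x0 n t) \<le> norm x0 * exp (L * (t - a)))"
proof (induction n)
  case 0
  have "picard_iterate G a x0 0 = (\<lambda>_. x0)" by (rule ext) simp
  then show ?case using L_nonneg by (auto simp: mult_le_cancel_left1)
next
  case (Suc n)
  let ?y = "picard_iterate G a x0 n"
  have "?y \<tau> \<in> cball 0 r" if "\<tau> \<in> {a..b}" for \<tau>
    using Suc.IH that by (intro tube_subset_cball[OF that]) auto
  then have int: "(\<lambda>\<tau>. G \<tau> (?y \<tau>)) integrable_on {a..b}"
    using Suc.IH by (intro integrable) auto
  have "continuous_on {a..b} (\<lambda>t. x0 + integral {a..t} (\<lambda>\<tau>. G \<tau> (?y \<tau>)))"
    using int by (intro continuous_intros indefinite_integral_continuous_1)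
  moreover have "picard_iterate G a x0 (Suc n) = (\<lambda>t. x0 + integral {a..t} (\<lambda>\<tau>. G \<tau> (?y \<tau>)))"
    by (rule ext) simp
  ultimately have "continuous_on {a..b} (picard_iterate G a x0 (Suc n))" by simp
  moreover have "norm (picard_iterate G a x0 (Suc n) t) \<le> norm x0 * exp (L * (t - a))"
    if t: "t \<in> {a..b}" for t
  proof -
    have exp_int: "((\<lambda>\<tau>. norm x0 * (L * exp (L * (\<tau> - a)))) has_integral
        (norm x0 * (exp (L * (t - a)) - 1))) {a..t}"
      using t by (intro has_integral_mult_right has_integral_scaled_exp) auto
    have "norm (integral {a..t} (\<lambda>\<tau>. G \<tau> (?y \<tau>)))
        \<le> integral {a..t} (\<lambda>\<tau>. norm x0 * (L * exp (L * (\<tau> - a))))"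
    proof (rule integral_norm_bound_integral[OF _ has_integral_integrable[OF exp_int]])
      show "(\<lambda>\<tau>. G \<tau> (?y \<tau>)) integrable_on {a..t}"
        using t by (intro integrable_on_subinterval[OF int]) auto
      fix \<tau> assume "\<tau> \<in> {a..t}"
      then have \<tau>: "\<tau> \<in> {a..b}" using t by auto
      have "norm (G \<tau> (?y \<tau>)) \<le> L * norm (?y \<tau>)"
        by (rule growth_in_tube[OF \<tau>]) (use Suc.IH \<tau> in blast)
      also have "\<dots> \<le> L * (norm x0 * exp (L * (\<tau> - a)))"
        using Suc.IH \<tau> L_nonneg by (simp add: mult_left_mono)
      finally show "norm (G \<tau> (?y \<tau>)) \<le> norm x0 * (L * exp (L * (\<tau> - a)))"
        by (simp add: algebra_simps)
    qed
    also have "\<dots> = norm x0 * (exp (L * (t - a)) - 1)" by (rule integral_unique[OF exp_int])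
    finally show ?thesis
      using norm_triangle_ineq[of x0 "integral {a..t} (\<lambda>\<tau>. G \<tau> (?y \<tau>))"]
      by (simp add: algebra_simps)
  qed
  ultimately show ?case by blast
qed

lemma picard_iterate_in_cball: "t \<in> {a..b} \<Longrightarrow> picard_iterate G a x0 n t \<in> cball 0 r"
  using picard_iterate_tube tube_subset_cball by blast

lemma picard_iterate_integrable:
  "t \<in> {a..b} \<Longrightarrow> (\<lambda>\<tau>. G \<tau> (picard_iterate G a x0 n \<tau>)) integrable_on {a..t}"
  using picard_iterate_tube picard_iterate_in_cball
  by (intro integrable_on_subinterval[OF integrable]) auto

text \<open>The weight \<open>exp (2 L (t - a))\<close> absorbs the integration, so the successive
  differences decay geometrically and no factorials are needed.\<close>
lemma picard_iterate_diff_le: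
  assumes "t \<in> {a..b}"
  shows "norm (picard_iterate G a x0 (Suc n) t - picard_iterate G a x0 n t)
    \<le> 2 * r * (1/2) ^ n * exp (2 * L * (t - a))"
  using assms
proof (induction n arbitrary: t)
  case 0
  have "norm (picard_iterate G a x0 1 t - x0) \<le> r + r"
    using picard_iterate_in_cball[OF 0, of 1] picard_iterate_in_cball[OF 0, of 0]
      norm_triangle_ineq4[of "picard_iterate G a x0 1 t" x0] by simp
  also have "\<dots> \<le> 2 * r * exp (2 * L * (t - a))"
    using 0 L_nonneg r_nonneg by (auto simp: mult_le_cancel_left1)
  finally show ?case by simp
next
  case (Suc n)
  let ?x = "picard_iterate G a x0"
  define K where "K = r * (1/2) ^ n"
  have exp_int: "((\<lambda>\<tau>. K * (2 * L * exp (2 * L * (\<tau> - a)))) has_integral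
      (K * (exp (2 * L * (t - a)) - 1))) {a..t}"
    using Suc.prems by (intro has_integral_mult_right has_integral_scaled_exp) auto
  have "?x (Suc (Suc n)) t - ?x (Suc n) t
      = integral {a..t} (\<lambda>\<tau>. G \<tau> (?x (Suc n) \<tau>)) - integral {a..t} (\<lambda>\<tau>. G \<tau> (?x n \<tau>))"
    by simp
  also have "\<dots> = integral {a..t} (\<lambda>\<tau>. G \<tau> (?x (Suc n) \<tau>) - G \<tau> (?x n \<tau>))"
    using Suc.prems by (intro integral_diff[symmetric] picard_iterate_integrable)
  also have "norm \<dots> \<le> integral {a..t} (\<lambda>\<tau>. K * (2 * L * exp (2 * L * (\<tau> - a))))"
  proof (intro integral_norm_bound_integral integrable_diff picard_iterate_integrable Suc.prems
      has_integral_integrable[OF exp_int])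
    fix \<tau> assume "\<tau> \<in> {a..t}"
    then have \<tau>: "\<tau> \<in> {a..b}" using Suc.prems by auto
    have "norm (G \<tau> (?x (Suc n) \<tau>) - G \<tau> (?x n \<tau>)) \<le> L * norm (?x (Suc n) \<tau> - ?x n \<tau>)"
      using lipschitz_onD[OF lip[OF \<tau>] picard_iterate_in_cball[OF \<tau>, of "Suc n"]
          picard_iterate_in_cball[OF \<tau>, of n]]
      by (simp only: dist_norm)
    also have "\<dots> \<le> L * (2 * r * (1/2) ^ n * exp (2 * L * (\<tau> - a)))"
      using Suc.IH[OF \<tau>] L_nonneg by (intro mult_left_mono)
    finally show "norm (G \<tau> (?x (Suc n) \<tau>) - G \<tau> (?x n \<tau>)) \<le> K * (2 * L * exp (2 * L * (\<tau> - a)))"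
      by (simp add: K_def algebra_simps)
  qed
  also have "\<dots> = K * (exp (2 * L * (t - a)) - 1)" by (rule integral_unique[OF exp_int])
  also have "\<dots> \<le> K * exp (2 * L * (t - a))"
    using r_nonneg by (intro mult_left_mono) (auto simp: K_def)
  finally show ?case by (simp add: K_def)
qed

lemma picard_iterate_uniform_limit:
  "\<exists>z. uniform_limit {a..b} (picard_iterate G a x0) z sequentially"
proof -
  let ?x = "picard_iterate G a x0"
  define M where "M i = 2 * r * exp (2 * L * (b - a)) * (1/2) ^ i" for i :: nat
  have "uniform_limit {a..b} (\<lambda>n t. \<Sum>i<n. ?x (Suc i) t - ?x i t)
      (\<lambda>t. \<Sum>i. ?x (Suc i) t - ?x i t) sequentially"
  proof (rule Weierstrass_m_test)
    show "summable M" unfolding M_def by (intro summable_mult summable_geometric) simp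
    fix i t assume t: "t \<in> {a..b}"
    have "exp (2 * L * (t - a)) \<le> exp (2 * L * (b - a))"
      using t L_nonneg by (auto intro: mult_left_mono)
    then show "norm (?x (Suc i) t - ?x i t) \<le> M i"
      using picard_iterate_diff_le[OF t, of i] r_nonneg
      by (elim order_trans) (simp add: M_def mult_left_mono mult_right_mono)
  qed
  then have "uniform_limit {a..b} (\<lambda>n t. x0 + (\<Sum>i<n. ?x (Suc i) t - ?x i t))
      (\<lambda>t. x0 + (\<Sum>i. ?x (Suc i) t - ?x i t)) sequentially"
    by (intro uniform_limit_intros)
  moreover have "x0 + (\<Sum>i<n. ?x (Suc i) t - ?x i t) = ?x n t" for n t
    using sum_lessThan_telescope[of "\<lambda>i. ?x i t" n] by simp
  then have "(\<lambda>n t. x0 + (\<Sum>i<n. ?x (Suc i) t - ?x i t)) = ?x"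
    by (simp add: fun_eq_iff)
  ultimately show ?thesis by auto
qed

lemma integral_solution_exists:
  "\<exists>z. z a = x0 \<and> integral_solution G z a b \<and>
     (\<forall>t\<in>{a..b}. norm (z t) \<le> norm x0 * exp (L * (t - a)))"
proof -
  let ?x = "picard_iterate G a x0"
  obtain z where lim: "uniform_limit {a..b} ?x z sequentially"
    using picard_iterate_uniform_limit by blast
  have pointwise: "(\<lambda>n. ?x n t) \<longlonglongrightarrow> z t" if "t \<in> {a..b}" for t
    by (rule tendsto_uniform_limitI[OF lim that])
  have z_a: "z a = x0"
    using pointwise[of a] ab by (simp add: picard_iterate_start LIMSEQ_const_iff)
  have z_tube: "norm (z t) \<le> norm x0 * exp (L * (t - a))" if t: "t \<in> {a..b}" for t
    using picard_iterate_tube t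
    by (intro LIMSEQ_le_const2[OF tendsto_norm[OF pointwise[OF t]]]) auto
  have z_cont: "continuous_on {a..b} z"
    using picard_iterate_tube by (intro uniform_limit_theorem[OF _ lim]) auto
  have "((\<lambda>\<tau>. G \<tau> (z \<tau>)) has_integral (z t - z a)) {a..t}" if t: "t \<in> {a..b}" for t
  proof -
    have sub: "{a..t} \<subseteq> {a..b}" using t by auto
    have z_in: "\<And>\<tau>. \<tau> \<in> {a..b} \<Longrightarrow> z \<tau> \<in> cball 0 r"
      using z_tube tube_subset_cball by blast
    have z_int: "(\<lambda>\<tau>. G \<tau> (z \<tau>)) integrable_on {a..t}"
      using sub z_cont z_in by (intro integrable_on_subinterval[OF integrable]) auto
    have "uniform_limit {a..t} (\<lambda>n \<tau>. G \<tau> (?x n \<tau>)) (\<lambda>\<tau>. G \<tau> (z \<tau>)) sequentially"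
    proof (rule uniform_limit_compose_lipschitz[OF uniform_limit_on_subset[OF lim sub]])
      show "\<And>\<tau>. \<tau> \<in> {a..t} \<Longrightarrow> L-lipschitz_on (cball 0 r) (G \<tau>)"
        using sub lip by blast
      show "\<forall>\<^sub>F n in sequentially. \<forall>\<tau>\<in>{a..t}. ?x n \<tau> \<in> cball 0 r"
        using sub picard_iterate_in_cball by (intro always_eventually) blast
      show "\<And>\<tau>. \<tau> \<in> {a..t} \<Longrightarrow> z \<tau> \<in> cball 0 r"
        using sub z_in by blast
    qed
    then have "(\<lambda>n. integral {a..t} (\<lambda>\<tau>. G \<tau> (?x n \<tau>))) \<longlonglongrightarrow> integral {a..t} (\<lambda>\<tau>. G \<tau> (z \<tau>))"
      by (rule integral_tendsto_of_uniform_limit[OF _ picard_iterate_integrable[OF t] z_int])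
    then have "(\<lambda>n. x0 + integral {a..t} (\<lambda>\<tau>. G \<tau> (?x n \<tau>)))
        \<longlonglongrightarrow> x0 + integral {a..t} (\<lambda>\<tau>. G \<tau> (z \<tau>))"
      by (rule tendsto_add[OF tendsto_const])
    moreover have "(\<lambda>n. x0 + integral {a..t} (\<lambda>\<tau>. G \<tau> (?x n \<tau>))) \<longlonglongrightarrow> z t"
      using LIMSEQ_Suc[OF pointwise[OF t]] by simp
    ultimately have "z t = x0 + integral {a..t} (\<lambda>\<tau>. G \<tau> (z \<tau>))"
      using LIMSEQ_unique by blast
    then show ?thesis using z_int z_a by (simp add: has_integral_integrable_integral)
  qed
  with z_a z_tube show ?thesis by (auto simp: integral_solution_def)
qed

end

section \<open>Measurability of Caratheodory compositions\<close>

lemma pw_continuous_nonneg_measurable_on: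
  fixes g :: "real \<Rightarrow> 'c::euclidean_space"
  assumes pw: "pw_continuous_nonneg g" and a: "0 \<le> a"
  shows "g measurable_on {a..b}"
proof -
  obtain S where S: "finite S" "continuous_on ({0..max a b} - S) g"
    using pw a unfolding pw_continuous_nonneg_def by (meson max.coboundedI1)
  have S_leb: "{a..b} - S \<in> sets lebesgue"
  proof (rule sets.Diff)
    show "S \<in> sets lebesgue" using S(1) by (intro negligible_imp_sets negligible_finite)
  qed simp
  have "continuous_on ({a..b} - S) g"
    by (rule continuous_on_subset[OF S(2)]) (use a in auto)
  then have "g \<in> borel_measurable (lebesgue_on ({a..b} - S))"
    by (rule continuous_imp_measurable_on_sets_lebesgue[OF _ S_leb])
  then have "g measurable_on ({a..b} - S)"
    by (subst measurable_on_iff_borel_measurable[OF S_leb])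
  then show ?thesis
    by (rule measurable_on_spike_set) (use S(1) in \<open>auto intro: negligible_finite negligible_subset\<close>)
qed

lemma loc_lipschitz_in_xE:
  assumes "loc_lipschitz_in_x D g" "0 \<le> T" "x0 \<in> D"
  obtains r L where "0 < r" "\<And>t. t \<in> {0..T} \<Longrightarrow> L-lipschitz_on (ball x0 r \<inter> D) (g t)"
proof -
  obtain r L where "0 < r" and L: "\<forall>t\<in>{0..T}. \<forall>x\<in>ball x0 r \<inter> D. \<forall>y\<in>ball x0 r \<inter> D.
      norm (g t x - g t y) \<le> L * dist x y"
    using assms unfolding loc_lipschitz_in_x_def by blast
  have "\<bar>L\<bar>-lipschitz_on (ball x0 r \<inter> D) (g t)" if "t \<in> {0..T}" for t
  proof (rule lipschitz_onI)
    fix x y assume "x \<in> ball x0 r \<inter> D" "y \<in> ball x0 r \<inter> D"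
    then have "norm (g t x - g t y) \<le> L * dist x y" using L that by blast
    also have "\<dots> \<le> \<bar>L\<bar> * dist x y" by (intro mult_right_mono) auto
    finally show "dist (g t x) (g t y) \<le> \<bar>L\<bar> * dist x y" by (simp add: dist_norm)
  qed simp
  with \<open>0 < r\<close> show thesis by (rule that)
qed

lemma loc_lipschitz_in_x_continuous_on:
  assumes lip: "loc_lipschitz_in_x D g" and t: "0 \<le> t"
  shows "continuous_on D (g t)"
  unfolding continuous_on_eq_continuous_within
proof
  fix x0 assume x0: "x0 \<in> D"
  obtain r L where r: "0 < r" and L: "L-lipschitz_on (ball x0 r \<inter> D) (g t)"
    using loc_lipschitz_in_xE[OF lip t x0] t by (metis atLeastAtMost_iff order_refl)
  have "continuous (at x0 within ball x0 r \<inter> D) (g t)"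
    using L x0 r by (intro lipschitz_on_continuous_within) auto
  moreover have "at x0 within ball x0 r \<inter> D = at x0 within D"
    using r by (intro at_within_nhd[of _ "ball x0 r"]) auto
  ultimately show "continuous (at x0 within D) (g t)" by simp
qed

lemma grid_cell_iff:
  fixes a h t :: real
  assumes h: "0 < h" and t: "a \<le> t"
  shows "a + real j * h \<le> t \<and> t < a + real (Suc j) * h \<longleftrightarrow> j = nat \<lfloor>(t - a) / h\<rfloor>"
proof -
  have "a + real j * h \<le> t \<and> t < a + real (Suc j) * h \<longleftrightarrow>
      real j \<le> (t - a) / h \<and> (t - a) / h < real j + 1"
    using h by (simp add: field_simps)
  also have "\<dots> \<longleftrightarrow> \<lfloor>(t - a) / h\<rfloor> = int j"
    by (simp add: floor_eq_iff)
  also have "\<dots> \<longleftrightarrow> j = nat \<lfloor>(t - a) / h\<rfloor>"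
    using h t by auto
  finally show ?thesis .
qed

lemma grid_node_bounds:
  fixes a h t :: real
  assumes "0 < h" "a \<le> t"
  shows "a + real (nat \<lfloor>(t - a) / h\<rfloor>) * h \<le> t" "t < a + real (nat \<lfloor>(t - a) / h\<rfloor>) * h + h"
  using grid_cell_iff[OF assms, of "nat \<lfloor>(t - a) / h\<rfloor>"] by (auto simp: algebra_simps)

lemma grid_node_tendsto:
  fixes h :: "nat \<Rightarrow> real"
  assumes h: "\<And>n. 0 < h n" "h \<longlonglongrightarrow> 0" and t: "a \<le> t"
  shows "(\<lambda>n. a + real (nat \<lfloor>(t - a) / h n\<rfloor>) * h n) \<longlonglongrightarrow> t"
proof -
  have "(\<lambda>n. a + real (nat \<lfloor>(t - a) / h n\<rfloor>) * h n - t) \<longlonglongrightarrow> 0"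
  proof (rule Lim_null_comparison[OF always_eventually h(2)])
    show "\<forall>n. norm (a + real (nat \<lfloor>(t - a) / h n\<rfloor>) * h n - t) \<le> h n"
    proof
      fix n
      show "norm (a + real (nat \<lfloor>(t - a) / h n\<rfloor>) * h n - t) \<le> h n"
        using grid_node_bounds[OF h(1)[of n] t] by simp
    qed
  qed
  then show ?thesis by (simp add: LIM_zero_iff)
qed

lemma sum_grid_indicator:
  fixes a h t :: real and v :: "nat \<Rightarrow> 'c::real_vector"
  assumes h: "0 < h" and t: "a \<le> t" "t < a + real N * h"
  shows "(\<Sum>j<N. indicat_real {a + real j * h..<a + real (Suc j) * h} t *\<^sub>R v j) = v (nat \<lfloor>(t - a) / h\<rfloor>)"
proof -
  let ?k = "nat \<lfloor>(t - a) / h\<rfloor>"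
  have "real ?k * h < real N * h" using grid_node_bounds(1)[OF h t(1)] t(2) by linarith
  then have k: "?k < N" using h by simp
  have "(\<Sum>j<N. indicat_real {a + real j * h..<a + real (Suc j) * h} t *\<^sub>R v j)
      = (\<Sum>j<N. if j = ?k then v j else 0)"
    using grid_cell_iff[OF h t(1)] by (intro sum.cong) (auto simp: indicator_def)
  also have "\<dots> = v ?k" using k by simp
  finally show ?thesis .
qed

text \<open>Measurability of Caratheodory functions along continuous curves: sample the curve on
  finer and finer grids and pass to the pointwise limit of the resulting step compositions.\<close>
lemma measurable_on_compose_caratheodory:
  fixes g :: "real \<Rightarrow> 'x::euclidean_space \<Rightarrow> 'c::euclidean_space"
  assumes g_meas: "\<And>x. x \<in> D \<Longrightarrow> (\<lambda>t. g t x) measurable_on {a..b}"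
    and g_cont: "\<And>t. t \<in> {a..b} \<Longrightarrow> continuous_on D (g t)"
    and y_cont: "continuous_on {a..b} y" and y_in: "\<And>t. t \<in> {a..b} \<Longrightarrow> y t \<in> D"
  shows "(\<lambda>t. g t (y t)) measurable_on {a..b}"
proof (cases "a < b")
  case False
  have "(\<lambda>t. if t \<in> {} then g t (y t) else 0) measurable_on UNIV" by simp
  then have empty: "(\<lambda>t. g t (y t)) measurable_on {}" by (rule measurable_on_UNIV[THEN iffD1])
  have "negligible {a..b}" using False by (cases "a = b") auto
  then show ?thesis using measurable_on_spike_set[OF empty] by simp
next
  case ab: True
  define h where "h n = (b - a) / real (Suc n)" for n
  define node where "node n t = a + real (nat \<lfloor>(t - a) / h n\<rfloor>) * h n" for n t
  define A where "A n t = (\<Sum>j<Suc n. indicat_real {a + real j * h n..<a + real (Suc j) * h n} t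
      *\<^sub>R g t (y (a + real j * h n)))" for n t
  have h: "0 < h n" for n using ab by (simp add: h_def)
  have b_eq: "b = a + real (Suc n) * h n" for n using ab by (simp add: h_def)
  have grid_in: "a + real j * h n \<in> {a..b}" if "j \<le> Suc n" for n j
  proof -
    have "real j * h n \<le> real (Suc n) * h n" using that h[of n] by (intro mult_right_mono) auto
    then show ?thesis using h[of n] b_eq[of n] by auto
  qed
  have A_meas: "A n measurable_on {a..b}" for n
    unfolding A_def
  proof (intro measurable_on_sum measurable_on_scaleR)
    fix j assume "j \<in> {..<Suc n}"
    show "indicat_real {a + real j * h n..<a + real (Suc j) * h n} measurable_on {a..b}"
      by (rule measurable_on_UNIV[THEN iffD1], rule measurable_on_restrict[OF indicator_measurable_on]) auto
    show "(\<lambda>t. g t (y (a + real j * h n))) measurable_on {a..b}"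
      using \<open>j \<in> {..<Suc n}\<close> by (intro g_meas y_in grid_in) auto
  qed simp
  have A_lim: "(\<lambda>n. A n t) \<longlonglongrightarrow> g t (y t)" if t: "t \<in> {a..b} - {b}" for t
  proof -
    have A_eq: "A n t = g t (y (node n t))" for n
      unfolding A_def node_def using t b_eq[of n]
      by (intro sum_grid_indicator[where v = "\<lambda>j. g t (y (a + real j * h n))"] h) auto
    have node_in: "node n t \<in> {a..b}" for n
    proof -
      have "0 \<le> real (nat \<lfloor>(t - a) / h n\<rfloor>) * h n" using h[of n] by simp
      then show ?thesis
        using grid_node_bounds(1)[OF h[of n], of a t] t unfolding node_def atLeastAtMost_iff by auto
    qed
    have "h \<longlonglongrightarrow> 0" unfolding h_def by (rule LIMSEQ_Suc[OF lim_const_over_n])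
    then have "(\<lambda>n. node n t) \<longlonglongrightarrow> t" unfolding node_def using t by (intro grid_node_tendsto h) auto
    then have "(\<lambda>n. y (node n t)) \<longlonglongrightarrow> y t"
      using t node_in by (intro continuous_on_tendsto_compose[OF y_cont] always_eventually) auto
    then have "(\<lambda>n. g t (y (node n t))) \<longlonglongrightarrow> g t (y t)"
      using t node_in y_in by (intro continuous_on_tendsto_compose[OF g_cont] always_eventually) auto
    then show ?thesis by (simp add: A_eq)
  qed
  show ?thesis by (rule measurable_on_limit[OF A_meas negligible_sing A_lim])
qed

lemma measurable_on_compose_caratheodory2:
  fixes g :: "real \<Rightarrow> 'x::euclidean_space \<Rightarrow> 'w::euclidean_space \<Rightarrow> 'c::euclidean_space"
  assumes g_meas: "\<And>x w. (\<lambda>t. g t x w) measurable_on {a..b}"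
    and g_cont: "\<And>t. t \<in> {a..b} \<Longrightarrow> continuous_on UNIV (\<lambda>p. g t (fst p) (snd p))"
    and y_cont: "continuous_on {a..b} y" and w_meas: "w measurable_on {a..b}"
  shows "(\<lambda>t. g t (y t) (w t)) measurable_on {a..b}"
proof -
  obtain N c where N: "negligible N" and c_cont: "\<And>n. continuous_on UNIV (c n)"
    and c_lim: "\<And>t. t \<notin> N \<Longrightarrow> (\<lambda>n. c n t) \<longlonglongrightarrow> (if t \<in> {a..b} then w t else 0)"
    using w_meas unfolding measurable_on_def by blast
  have "(\<lambda>t. g t (y t) (c n t)) measurable_on {a..b}" for n
  proof -
    have pair_cont: "continuous_on {a..b} (\<lambda>t. (y t, c n t))"
      by (intro continuous_on_Pair y_cont continuous_on_subset[OF c_cont]) auto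
    have "(\<lambda>t. (\<lambda>p. g t (fst p) (snd p)) (y t, c n t)) measurable_on {a..b}"
    proof (rule measurable_on_compose_caratheodory[where D = UNIV and g = "\<lambda>t p. g t (fst p) (snd p)"
          and y = "\<lambda>t. (y t, c n t)"])
      show "\<And>p. p \<in> UNIV \<Longrightarrow> (\<lambda>t. g t (fst p) (snd p)) measurable_on {a..b}"
        using g_meas by blast
    qed (use g_cont pair_cont in auto)
    then show ?thesis by simp
  qed
  moreover have "(\<lambda>n. g t (y t) (c n t)) \<longlonglongrightarrow> g t (y t) (w t)" if t: "t \<in> {a..b} - N" for t
  proof -
    have "(\<lambda>n. c n t) \<longlonglongrightarrow> w t" using c_lim[of t] t by simp
    then have "(\<lambda>n. (y t, c n t)) \<longlonglongrightarrow> (y t, w t)" by (rule tendsto_Pair[OF tendsto_const])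
    from continuous_on_tendsto_compose[OF g_cont this] t show ?thesis by simp
  qed
  ultimately show ?thesis by (rule measurable_on_limit[OF _ N])
qed

section \<open>The sampled feedback loop\<close>

lemma periodic_add_multiple:
  assumes per: "\<And>t. 0 \<le> t \<Longrightarrow> h (t + T) = h t" and "0 \<le> t" "0 \<le> T"
  shows "h (t + real m * T) = h t"
proof (induction m)
  case (Suc m)
  have "h (t + real (Suc m) * T) = h ((t + real m * T) + T)" by (simp add: algebra_simps)
  also have "\<dots> = h (t + real m * T)" using assms by (intro per) auto
  finally show ?case using Suc by simp
qed simp

lemma real_period_decomposition:
  fixes t T :: real
  assumes "0 \<le> t" "0 < T"
  obtains m s where "t = s + real m * T" "0 \<le> s" "s < T"
proof -
  define m where "m = nat \<lfloor>t / T\<rfloor>"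
  have "real m \<le> t / T" "t / T < real m + 1"
    using assms by (simp_all add: m_def)
  then have "real m * T \<le> t" "t < (real m + 1) * T"
    using assms by (simp_all add: field_simps)
  then show ?thesis by (intro that[of "t - real m * T" m]) (auto simp: algebra_simps)
qed

lemma next_multiple:
  fixes t T :: real
  assumes "0 \<le> t" "0 < T"
  obtains m :: nat where "t \<le> real m * T" "real m * T < t + T"
proof -
  obtain m s where ts: "t = s + real m * T" "0 \<le> s" "s < T"
    using real_period_decomposition[OF assms] .
  show thesis
  proof (cases "s = 0")
    case True then show ?thesis using ts assms by (intro that[of m]) auto
  next
    case False then show ?thesis using ts by (intro that[of "Suc m"]) (auto simp: algebra_simps)
  qed
qed

locale periodic_feedback =
  fixes f :: "real \<Rightarrow> 'a::euclidean_space \<Rightarrow> 'b::euclidean_space \<Rightarrow> 'a"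
    and Tp :: real and B Be :: "'a set" and V :: "'a \<Rightarrow> real"
    and \<alpha>1 \<alpha>2 c :: real
    and u :: "'a \<Rightarrow> real \<Rightarrow> 'b" and \<phi> :: "'a \<Rightarrow> real \<Rightarrow> 'a"
    and \<mu> :: "real \<Rightarrow> 'a \<Rightarrow> 'b"
  assumes Tp: "Tp > 0"
    and f_lip: "loc_lipschitz_in_x UNIV (\<lambda>t z. f t (fst z) (snd z))"
    and f_pw: "\<And>x w. pw_continuous_nonneg (\<lambda>t. f t x w)"
    and f_per: "\<And>t x w. t \<ge> 0 \<Longrightarrow> f (t + Tp) x w = f t x w"
    and f_eq: "\<And>t. t \<ge> 0 \<Longrightarrow> f t 0 0 = 0"
    and B_ball: "\<exists>r>0. B = ball 0 r"
    and \<alpha>: "0 < \<alpha>1" "\<alpha>1 \<le> \<alpha>2"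
    and V_bounds: "\<And>x. x \<in> B \<Longrightarrow> \<alpha>1 * (x \<bullet> x) \<le> V x \<and> V x \<le> \<alpha>2 * (x \<bullet> x)"
    and c: "0 \<le> c" "c < 1"
    and \<phi>_sol: "\<And>\<xi> t. \<xi> \<in> B \<Longrightarrow> t \<in> {0..Tp} \<Longrightarrow>
        ((\<lambda>\<tau>. f \<tau> (\<phi> \<xi> \<tau>) (u \<xi> \<tau>)) has_integral (\<phi> \<xi> t - \<xi>)) {0..t}"
    and \<phi>_end: "\<And>\<xi>. \<xi> \<in> B \<Longrightarrow> \<phi> \<xi> Tp \<in> B \<and> V (\<phi> \<xi> Tp) \<le> c * V \<xi>"
    and u0: "\<And>t. t \<in> {0..Tp} \<Longrightarrow> u 0 t = 0"
    and B_Be: "B \<subseteq> Be"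
    and \<mu>_pw: "\<And>x. x \<in> Be \<Longrightarrow> pw_continuous_nonneg (\<lambda>t. \<mu> t x)"
    and \<mu>_per: "\<And>t x. t \<ge> 0 \<Longrightarrow> x \<in> Be \<Longrightarrow> \<mu> (t + Tp) x = \<mu> t x"
    and \<mu>_lip: "loc_lipschitz_in_x Be \<mu>"
    and \<mu>_\<phi>: "\<And>\<xi> t. \<xi> \<in> B \<Longrightarrow> t \<in> {0..<Tp} \<Longrightarrow> \<phi> \<xi> t \<in> Be \<and> \<mu> t (\<phi> \<xi> t) = u \<xi> t"
begin

definition F :: "real \<Rightarrow> 'a \<Rightarrow> 'a" where "F t x = f t x (\<mu> t x)"

lemma cl_solution_iff: "cl_solution f \<mu> Be x a b \<longleftrightarrow> (\<forall>t\<in>{a..b}. x t \<in> Be) \<and> integral_solution F x a b"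
  by (simp add: cl_solution_def integral_solution_def F_def)

lemma zero_in_B: "0 \<in> B"
  using B_ball by auto

lemma phi_start: "\<xi> \<in> B \<Longrightarrow> \<phi> \<xi> 0 = \<xi>"
  using \<phi>_sol[of \<xi> 0] Tp by (auto dest: has_integral_unique[OF has_integral_refl(2)])

lemma phi_in_Be: "\<xi> \<in> B \<Longrightarrow> t \<in> {0..Tp} \<Longrightarrow> \<phi> \<xi> t \<in> Be"
  using \<mu>_\<phi>[of \<xi> t] \<phi>_end[of \<xi>] B_Be by (cases "t = Tp") auto

text \<open>The trajectories from (A4) solve the closed loop: \<open>u\<^sub>\<xi>\<close> and \<open>\<mu>\<close> agree along them
  except at the single time \<open>Tp\<close>, which does not affect the integral.\<close>
lemma phi_integral_solution: "\<xi> \<in> B \<Longrightarrow> integral_solution F (\<phi> \<xi>) 0 Tp"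
  unfolding integral_solution_def
proof
  fix t assume \<xi>: "\<xi> \<in> B" and t: "t \<in> {0..Tp}"
  show "((\<lambda>\<tau>. F \<tau> (\<phi> \<xi> \<tau>)) has_integral (\<phi> \<xi> t - \<phi> \<xi> 0)) {0..t}"
    unfolding phi_start[OF \<xi>]
  proof (rule has_integral_spike_finite[where S = "{Tp}", OF _ _ \<phi>_sol[OF \<xi> t]])
    fix \<tau> assume "\<tau> \<in> {0..t} - {Tp}"
    then have "\<tau> \<in> {0..<Tp}" using t by auto
    then show "F \<tau> (\<phi> \<xi> \<tau>) = f \<tau> (\<phi> \<xi> \<tau>) (u \<xi> \<tau>)" using \<mu>_\<phi>[OF \<xi>] by (simp add: F_def)
  qed simp
qed

lemma cl_solution_phi: "\<xi> \<in> B \<Longrightarrow> cl_solution f \<mu> Be (\<phi> \<xi>) 0 Tp"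
  using phi_integral_solution phi_in_Be by (simp add: cl_solution_iff)

lemma cl_solution_subinterval:
  "cl_solution f \<mu> Be x a b \<Longrightarrow> a \<le> a' \<Longrightarrow> a' \<le> b' \<Longrightarrow> b' \<le> b \<Longrightarrow> cl_solution f \<mu> Be x a' b'"
  unfolding cl_solution_iff by (auto intro: integral_solution_subinterval)

lemma cl_solution_glue:
  assumes x: "cl_solution f \<mu> Be x a b" and y: "cl_solution f \<mu> Be y b b'"
    and eq: "x b = y b" and ab: "a \<le> b"
  shows "cl_solution f \<mu> Be (\<lambda>t. if t \<le> b then x t else y t) a b'"
  unfolding cl_solution_iff
proof
  let ?z = "\<lambda>t. if t \<le> b then x t else y t"
  show "\<forall>t\<in>{a..b'}. ?z t \<in> Be" using x y eq by (auto simp: cl_solution_iff)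
  have "integral_solution F ?z a b"
    by (rule integral_solution_cong[where z = x]) (use x in \<open>auto simp: cl_solution_iff\<close>)
  moreover have "integral_solution F ?z b b'"
    by (rule integral_solution_cong[where z = y]) (use y eq in \<open>auto simp: cl_solution_iff\<close>)
  ultimately show "integral_solution F ?z a b'" using ab by (rule integral_solution_append)
qed

lemma F_periodic: "0 \<le> t \<Longrightarrow> x \<in> Be \<Longrightarrow> F (t + real m * Tp) x = F t x"
  using periodic_add_multiple[where h = "\<lambda>t. f t x (\<mu> t x)" and T = Tp] f_per \<mu>_per Tp
  by (simp add: F_def)

lemma phi_shifted_solution:
  assumes "\<xi> \<in> B" "s = real m * Tp"
  shows "integral_solution F (\<lambda>t. \<phi> \<xi> (t - s)) s (s + Tp)"
proof (rule integral_solution_cong)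
  show "integral_solution (\<lambda>t. F (t + - s)) (\<lambda>t. \<phi> \<xi> (t + - s)) s (s + Tp)"
    using integral_solution_shift[OF phi_integral_solution[OF assms(1)], of "- s"]
    by (simp add: add.commute)
  fix t assume "t \<in> {s..s + Tp}"
  then have "t - s \<in> {0..Tp}" by auto
  then show "F t (\<phi> \<xi> (t + - s)) = F (t + - s) (\<phi> \<xi> (t + - s))"
    using F_periodic[of "t - s" "\<phi> \<xi> (t - s)" m] phi_in_Be[OF assms(1)] assms(2) by simp
qed simp

lemma f_lipschitz_near_origin:
  obtains r L where "0 < r" "\<And>s. s \<in> {0..Tp} \<Longrightarrow> L-lipschitz_on (ball 0 r) (\<lambda>p. f s (fst p) (snd p))"
proof -
  obtain r L where "0 < r" "\<And>s. s \<in> {0..Tp} \<Longrightarrow> L-lipschitz_on (ball 0 r \<inter> UNIV) (\<lambda>p. f s (fst p) (snd p))"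
    using loc_lipschitz_in_xE[OF f_lip, of Tp 0] Tp by auto
  then show ?thesis by (intro that[of r L]) auto
qed

lemma mu_lipschitz_near_origin:
  obtains r L where "0 < r" "\<And>s. s \<in> {0..Tp} \<Longrightarrow> L-lipschitz_on (ball 0 r \<inter> Be) (\<mu> s)"
proof -
  have "0 \<le> Tp" "0 \<in> Be" using Tp zero_in_B B_Be by auto
  from loc_lipschitz_in_xE[OF \<mu>_lip this] that show ?thesis by blast
qed

text \<open>The zero input keeps the origin at rest, by uniqueness (Gronwall with initial value 0).\<close>
lemma phi_zero: "t \<in> {0..Tp} \<Longrightarrow> \<phi> 0 t = 0"
proof -
  assume t: "t \<in> {0..Tp}"
  obtain r L where r: "0 < r"
    and L: "\<And>s. s \<in> {0..Tp} \<Longrightarrow> L-lipschitz_on (ball 0 r) (\<lambda>p. f s (fst p) (snd p))"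
    by (rule f_lipschitz_near_origin) blast
  have "L-lipschitz_on (cball 0 (r/2)) (\<lambda>x. f s x 0)" if s: "s \<in> {0..Tp}" for s
  proof -
    have "1-lipschitz_on (cball 0 (r/2)) (\<lambda>x. (x, 0::'b))"
      using lipschitz_on_Pair[OF lipschitz_on_id lipschitz_on_constant] by simp
    moreover have "L-lipschitz_on ((\<lambda>x. (x, 0::'b)) ` cball 0 (r/2)) (\<lambda>p. f s (fst p) (snd p))"
      using r by (intro lipschitz_on_subset[OF L[OF s]]) (auto simp: zero_prod_def dist_norm norm_Pair)
    ultimately show ?thesis using lipschitz_on_compose2 by fastforce
  qed
  moreover have "integral_solution (\<lambda>s x. f s x (u 0 s)) (\<phi> 0) 0 Tp"
    using \<phi>_sol[OF zero_in_B] by (simp add: integral_solution_def phi_start[OF zero_in_B])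
  then have "integral_solution (\<lambda>s x. f s x 0) (\<phi> 0) 0 Tp"
    by (rule integral_solution_cong) (simp_all add: u0)
  ultimately have "norm (\<phi> 0 t) \<le> norm (\<phi> 0 0) * exp (L * (t - 0))"
    using t f_eq r by (intro integral_solution_norm_le_of_lipschitz[where r = "r/2" and G = "\<lambda>s x. f s x 0"])
      (auto simp: phi_start[OF zero_in_B])
  then show ?thesis by (simp add: phi_start[OF zero_in_B])
qed

lemma mu_zero: "0 \<le> t \<Longrightarrow> \<mu> t 0 = 0"
proof -
  assume "0 \<le> t"
  then obtain m s where ts: "t = s + real m * Tp" "0 \<le> s" "s < Tp"
    using real_period_decomposition Tp by blast
  have "\<mu> s 0 = 0" using \<mu>_\<phi>[OF zero_in_B, of s] phi_zero[of s] u0[of s] ts by auto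
  then show ?thesis
    using periodic_add_multiple[where h = "\<lambda>t. \<mu> t 0" and T = Tp] \<mu>_per zero_in_B B_Be Tp ts
    by auto
qed

lemma F_zero: "0 \<le> t \<Longrightarrow> F t 0 = 0"
  by (simp add: F_def mu_zero f_eq)

lemma F_lipschitz_on_periodic:
  assumes lip: "\<And>s. s \<in> {0..Tp} \<Longrightarrow> L-lipschitz_on S (F s)" and S: "S \<subseteq> Be" and t: "0 \<le> t"
  shows "L-lipschitz_on S (F t)"
proof -
  obtain m s where ts: "t = s + real m * Tp" "0 \<le> s" "s < Tp"
    using real_period_decomposition[OF t Tp] by blast
  have "L-lipschitz_on S (F s)" using lip ts by auto
  moreover have "F t x = F s x" if "x \<in> S" for x
    using ts F_periodic[of s x m] that S by auto
  ultimately show ?thesis by (rule lipschitz_on_transform)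
qed

text \<open>Near the origin, \<open>x \<mapsto> (x, \<mu> t x)\<close> is Lipschitz and lands where \<open>f t\<close> is Lipschitz;
  periodicity makes the constants uniform in \<open>t \<ge> 0\<close>.\<close>
lemma F_lipschitz_near_origin:
  obtains \<rho> L where "0 < \<rho>" "cball 0 \<rho> \<subseteq> B" "\<And>t. 0 \<le> t \<Longrightarrow> L-lipschitz_on (cball 0 \<rho>) (F t)"
proof -
  obtain r1 Lf where r1: "0 < r1"
    and Lf: "\<And>s. s \<in> {0..Tp} \<Longrightarrow> Lf-lipschitz_on (ball 0 r1) (\<lambda>p. f s (fst p) (snd p))"
    by (rule f_lipschitz_near_origin) blast
  obtain r2 Lm where r2: "0 < r2" and Lm: "\<And>s. s \<in> {0..Tp} \<Longrightarrow> Lm-lipschitz_on (ball 0 r2 \<inter> Be) (\<mu> s)"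
    by (rule mu_lipschitz_near_origin) blast
  obtain rB where rB: "0 < rB" "B = ball 0 rB" using B_ball by blast
  have Lm0: "0 \<le> Lm" using Lm[of 0] Tp lipschitz_on_nonneg by auto
  define \<rho> where "\<rho> = min (rB / 2) (min (r2 / 2) (r1 / (2 * (1 + Lm))))"
  have \<rho>_le: "\<rho> \<le> rB / 2" "\<rho> \<le> r2 / 2" "\<rho> \<le> r1 / (2 * (1 + Lm))"
    unfolding \<rho>_def by (rule min.cobounded1, rule order_trans[OF min.cobounded2 min.cobounded1],
        rule order_trans[OF min.cobounded2 min.cobounded2])
  have "(1 + Lm) * \<rho> \<le> (1 + Lm) * (r1 / (2 * (1 + Lm)))"
    using \<rho>_le(3) Lm0 by (intro mult_left_mono) auto
  also have "\<dots> = r1 / 2"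
  proof -
    have "2 + 2 * Lm \<noteq> 0" "1 + Lm \<noteq> 0" using Lm0 by auto
    then show ?thesis by (simp add: field_simps)
  qed
  finally have \<rho>: "0 < \<rho>" "\<rho> < rB" "\<rho> < r2" "(1 + Lm) * \<rho> < r1"
    using rB r1 r2 Lm0 \<rho>_le by (auto simp: \<rho>_def)
  have \<rho>_B: "cball 0 \<rho> \<subseteq> B" using \<rho> rB by auto
  have \<rho>_mu: "cball 0 \<rho> \<subseteq> ball 0 r2 \<inter> Be" using \<rho> \<rho>_B B_Be by auto
  define L where "L = Lf * sqrt (1 + Lm\<^sup>2)"
  have "L-lipschitz_on (cball 0 \<rho>) (F s)" if s: "s \<in> {0..Tp}" for s
  proof -
    have pair_lip: "(sqrt (1\<^sup>2 + Lm\<^sup>2))-lipschitz_on (cball 0 \<rho>) (\<lambda>x. (x, \<mu> s x))"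
      by (intro lipschitz_on_Pair lipschitz_on_id lipschitz_on_subset[OF Lm[OF s] \<rho>_mu])
    have "(x, \<mu> s x) \<in> ball 0 r1" if x: "x \<in> cball 0 \<rho>" for x
    proof -
      have "norm (\<mu> s x) \<le> Lm * norm x"
        using \<rho> x s by (intro norm_le_of_lipschitz_zero[OF lipschitz_on_subset[OF Lm[OF s] \<rho>_mu]])
          (auto simp: mu_zero)
      then have "norm (x, \<mu> s x) \<le> (1 + Lm) * norm x"
        using norm_Pair_le[of x "\<mu> s x"] by (simp add: algebra_simps)
      also have "\<dots> \<le> (1 + Lm) * \<rho>" using x Lm0 by (intro mult_left_mono) auto
      finally show ?thesis unfolding mem_ball dist_0_norm using \<rho> by linarith
    qed
    then have "Lf-lipschitz_on ((\<lambda>x. (x, \<mu> s x)) ` cball 0 \<rho>) (\<lambda>p. f s (fst p) (snd p))"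
      by (intro lipschitz_on_subset[OF Lf[OF s]]) auto
    from lipschitz_on_compose2[OF pair_lip this] show ?thesis
      by (simp add: L_def F_def mult.commute)
  qed
  then have "L-lipschitz_on (cball 0 \<rho>) (F t)" if "0 \<le> t" for t
    by (rule F_lipschitz_on_periodic) (use \<rho>_B B_Be that in auto)
  with \<rho> \<rho>_B show thesis by (intro that) auto
qed

lemma F_integrable:
  assumes a: "0 \<le> a" and y_cont: "continuous_on {a..b} y" and y_in: "\<And>\<tau>. \<tau> \<in> {a..b} \<Longrightarrow> y \<tau> \<in> D"
    and D_Be: "D \<subseteq> Be" and bounded: "\<And>\<tau> x. 0 \<le> \<tau> \<Longrightarrow> x \<in> D \<Longrightarrow> norm (F \<tau> x) \<le> K"
  shows "(\<lambda>\<tau>. F \<tau> (y \<tau>)) integrable_on {a..b}"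
proof -
  have input_meas: "(\<lambda>\<tau>. \<mu> \<tau> (y \<tau>)) measurable_on {a..b}"
  proof (rule measurable_on_compose_caratheodory[where D = Be])
    show "\<And>x. x \<in> Be \<Longrightarrow> (\<lambda>t. \<mu> t x) measurable_on {a..b}"
      using \<mu>_pw a by (intro pw_continuous_nonneg_measurable_on)
    show "\<And>t. t \<in> {a..b} \<Longrightarrow> continuous_on Be (\<mu> t)"
      using a by (intro loc_lipschitz_in_x_continuous_on[OF \<mu>_lip]) auto
  qed (use y_cont y_in D_Be in auto)
  have "(\<lambda>\<tau>. f \<tau> (y \<tau>) (\<mu> \<tau> (y \<tau>))) measurable_on {a..b}"
  proof (rule measurable_on_compose_caratheodory2[OF _ _ y_cont input_meas])
    show "\<And>x w. (\<lambda>t. f t x w) measurable_on {a..b}"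
      using f_pw a by (intro pw_continuous_nonneg_measurable_on)
    show "\<And>t. t \<in> {a..b} \<Longrightarrow> continuous_on UNIV (\<lambda>p. f t (fst p) (snd p))"
      using a by (intro loc_lipschitz_in_x_continuous_on[OF f_lip]) auto
  qed
  then have "(\<lambda>\<tau>. F \<tau> (y \<tau>)) \<in> borel_measurable (lebesgue_on {a..b})"
    unfolding F_def by (rule measurable_on_imp_borel_measurable_lebesgue) simp
  then show ?thesis
    by (rule measurable_bounded_by_integrable_imp_integrable[where g = "\<lambda>_. K"])
      (use bounded y_in a in auto)
qed

definition sample_state :: "'a \<Rightarrow> nat \<Rightarrow> 'a" where
  "sample_state \<xi> j = ((\<lambda>\<zeta>. \<phi> \<zeta> Tp) ^^ j) \<xi>"

lemma sample_state_Suc: "sample_state \<xi> (Suc j) = \<phi> (sample_state \<xi> j) Tp"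
  by (simp add: sample_state_def)

lemma sample_state_in_B: "\<xi> \<in> B \<Longrightarrow> sample_state \<xi> j \<in> B"
  by (induction j) (auto simp: sample_state_def \<phi>_end)

text \<open>The trajectory that applies, on each period \<open>[s + j Tp, s + (j+1) Tp]\<close>, the input
  \<open>u\<close> computed from the state reached at its start.\<close>
definition concat_trajectory :: "'a \<Rightarrow> real \<Rightarrow> real \<Rightarrow> 'a" where
  "concat_trajectory \<xi> s t =
    (let j = nat \<lfloor>(t - s) / Tp\<rfloor> in \<phi> (sample_state \<xi> j) (t - s - real j * Tp))"

lemma concat_trajectory_on_period:
  assumes \<xi>: "\<xi> \<in> B" and t: "t \<in> {s + real n * Tp..s + real n * Tp + Tp}"
  shows "concat_trajectory \<xi> s t = \<phi> (sample_state \<xi> n) (t - (s + real n * Tp))"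
proof (cases "t < s + real n * Tp + Tp")
  case True
  have "real n \<le> (t - s) / Tp" "(t - s) / Tp < real n + 1"
    using t True Tp by (simp_all add: field_simps)
  then have "nat \<lfloor>(t - s) / Tp\<rfloor> = n" by linarith
  then show ?thesis by (simp add: concat_trajectory_def Let_def algebra_simps)
next
  case False
  then have t_end: "t = s + real (Suc n) * Tp" using t by (simp add: algebra_simps)
  then have "nat \<lfloor>(t - s) / Tp\<rfloor> = Suc n" using Tp by simp
  then have "concat_trajectory \<xi> s t = \<phi> (sample_state \<xi> (Suc n)) 0"
    by (simp add: concat_trajectory_def t_end)
  also have "\<dots> = \<phi> (sample_state \<xi> n) Tp"
    using phi_start[OF sample_state_in_B[OF \<xi>, of "Suc n"]] by (simp only: sample_state_Suc)
  finally show ?thesis by (simp add: t_end algebra_simps)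
qed

lemma concat_trajectory_cl_solution:
  assumes \<xi>: "\<xi> \<in> B" and s: "s = real m * Tp"
  shows "cl_solution f \<mu> Be (concat_trajectory \<xi> s) s (s + real n * Tp)"
proof (induction n)
  case 0
  have "concat_trajectory \<xi> s s = \<xi>"
    using concat_trajectory_on_period[OF \<xi>, of s s 0] phi_start[OF \<xi>] Tp
    by (simp add: sample_state_def)
  then show ?case using \<xi> B_Be by (auto simp: cl_solution_iff integral_solution_def)
next
  case (Suc n)
  define s' where "s' = s + real n * Tp"
  have s': "s' = real (m + n) * Tp" by (simp add: s'_def s algebra_simps)
  have on_period: "concat_trajectory \<xi> s t = \<phi> (sample_state \<xi> n) (t - s')"
    if "t \<in> {s'..s' + Tp}" for t
    using concat_trajectory_on_period[OF \<xi>, of t s n] that by (simp add: s'_def)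
  have "integral_solution F (concat_trajectory \<xi> s) s' (s' + Tp)"
    by (rule integral_solution_cong[OF phi_shifted_solution[OF sample_state_in_B[OF \<xi>] s']])
      (simp_all add: on_period)
  moreover have "concat_trajectory \<xi> s t \<in> Be" if "t \<in> {s'..s' + Tp}" for t
    using on_period[OF that] that phi_in_Be[OF sample_state_in_B[OF \<xi>]] by simp
  moreover have "s \<le> s'" using Tp by (simp add: s'_def)
  ultimately show ?case
    using Suc.IH unfolding cl_solution_iff
    by (auto simp: s'_def algebra_simps intro: integral_solution_append)
qed

lemma cl_solution_from_sample:
  assumes "\<xi> \<in> B" "s = real m * Tp"
  shows "\<exists>y. y s = \<xi> \<and> (\<forall>t1\<ge>s. cl_solution f \<mu> Be y s t1)"
proof (intro exI[of _ "concat_trajectory \<xi> s"] conjI allI impI)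
  show "concat_trajectory \<xi> s s = \<xi>"
    using concat_trajectory_on_period[OF assms(1), of s s 0] phi_start[OF assms(1)] Tp
    by (simp add: sample_state_def)
  fix t1 assume "s \<le> t1"
  obtain n where "(t1 - s) / Tp \<le> real n" using real_arch_simple by blast
  then have "t1 \<le> s + real n * Tp" using Tp by (simp add: field_simps)
  with concat_trajectory_cl_solution[OF assms, of n] \<open>s \<le> t1\<close>
  show "cl_solution f \<mu> Be (concat_trajectory \<xi> s) s t1"
    unfolding cl_solution_iff by (auto intro: integral_solution_subinterval)
qed

definition \<kappa> :: real where "\<kappa> = sqrt (\<alpha>2 / \<alpha>1)"

text \<open>\<open>max c (1/2)\<close> replaces \<open>c\<close>, which may be 0, so that the logarithm is finite.\<close>
definition rate :: real where "rate = - ln (max c (1/2)) / (2 * Tp)"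

lemma one_le_\<kappa>: "1 \<le> \<kappa>"
  using \<alpha> by (simp add: \<kappa>_def)

lemma rate_pos: "0 < rate"
  using c Tp by (simp add: rate_def divide_neg_pos)

lemma contraction_power: "max c (1/2) ^ j = (exp (- rate * (real j * Tp)))\<^sup>2"
proof -
  have "(exp (- rate * (real j * Tp)))\<^sup>2 = exp (real j * (- 2 * rate * Tp))"
    by (simp add: power2_eq_square algebra_simps flip: exp_add)
  also have "- 2 * rate * Tp = ln (max c (1/2))" using Tp by (simp add: rate_def)
  also have "exp (real j * ln (max c (1/2))) = max c (1/2) ^ j"
    by (simp add: exp_of_nat_mult)
  finally show ?thesis by simp
qed

lemma V_nonneg: "x \<in> B \<Longrightarrow> 0 \<le> V x"
  using V_bounds[of x] \<alpha> by (meson inner_ge_zero mult_nonneg_nonneg less_imp_le order_trans)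

lemma norm_le_of_V_le:
  assumes y: "y \<in> B" and \<xi>: "\<xi> \<in> B" and V_le: "V y \<le> c ^ j * V \<xi>"
  shows "norm y \<le> \<kappa> * exp (- rate * (real j * Tp)) * norm \<xi>"
proof (rule power2_le_imp_le)
  have "\<alpha>1 * (norm y)\<^sup>2 \<le> V y" using V_bounds[OF y] by (simp add: power2_norm_eq_inner)
  also have "\<dots> \<le> c ^ j * V \<xi>" by (rule V_le)
  also have "\<dots> \<le> max c (1/2) ^ j * V \<xi>"
    using c V_nonneg[OF \<xi>] by (intro mult_right_mono power_mono) auto
  also have "\<dots> \<le> max c (1/2) ^ j * (\<alpha>2 * (norm \<xi>)\<^sup>2)"
    using V_bounds[OF \<xi>] by (intro mult_left_mono) (auto simp: power2_norm_eq_inner)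
  finally have "(norm y)\<^sup>2 \<le> max c (1/2) ^ j * (\<alpha>2 / \<alpha>1) * (norm \<xi>)\<^sup>2"
    using \<alpha> by (simp add: field_simps)
  also have "\<dots> = (\<kappa> * exp (- rate * (real j * Tp)) * norm \<xi>)\<^sup>2"
    using \<alpha> by (simp add: contraction_power \<kappa>_def power_mult_distrib)
  finally show "(norm y)\<^sup>2 \<le> (\<kappa> * exp (- rate * (real j * Tp)) * norm \<xi>)\<^sup>2" .
  show "0 \<le> \<kappa> * exp (- rate * (real j * Tp)) * norm \<xi>" using one_le_\<kappa> by simp
qed

end

locale periodic_feedback_near_origin = periodic_feedback +
  fixes \<rho> L :: real
  assumes \<rho>_pos: "0 < \<rho>" and \<rho>_B: "cball 0 \<rho> \<subseteq> B"
    and F_lip: "\<And>t. 0 \<le> t \<Longrightarrow> L-lipschitz_on (cball 0 \<rho>) (F t)"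
begin

definition \<theta> :: real where "\<theta> = exp (L * Tp)"
definition \<delta> :: real where "\<delta> = \<rho> / (\<kappa> * \<theta> * \<theta>)"
definition K :: real where "K = \<kappa> * \<theta> * \<theta> * exp (2 * rate * Tp)"

lemma L_nonneg: "0 \<le> L"
  using F_lip[of 0] by (rule lipschitz_on_nonneg) simp

lemma one_le_\<theta>: "1 \<le> \<theta>"
  using L_nonneg Tp by (simp add: \<theta>_def)

lemma one_le_\<kappa>\<theta>: "1 \<le> \<kappa> * \<theta>"
  using mult_mono[OF one_le_\<kappa> one_le_\<theta>] one_le_\<kappa> by simp

lemma \<kappa>\<theta>\<theta>_\<delta>: "\<kappa> * \<theta> * \<theta> * \<delta> = \<rho>"
proof -
  have "\<kappa> \<noteq> 0" "\<theta> \<noteq> 0" using one_le_\<kappa> one_le_\<theta> by auto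
  then show ?thesis unfolding \<delta>_def by (simp add: field_simps)
qed

lemma \<delta>_pos: "0 < \<delta>"
  using \<rho>_pos one_le_\<kappa> one_le_\<theta> by (simp add: \<delta>_def)

lemma K_pos: "0 < K"
  using one_le_\<kappa> one_le_\<theta> by (simp add: K_def)

lemma \<delta>_\<theta>_le: "\<delta> * \<theta> \<le> \<rho>"
proof -
  have "1 * (\<delta> * \<theta>) \<le> (\<kappa> * \<theta>) * (\<delta> * \<theta>)"
    using one_le_\<kappa>\<theta> \<delta>_pos one_le_\<theta> by (intro mult_right_mono) auto
  then show ?thesis using \<kappa>\<theta>\<theta>_\<delta> by (simp add: algebra_simps)
qed

lemma norm_le_within_period:
  assumes sol: "integral_solution F x s s'" and s: "0 \<le> s" "s \<le> s'" "s' \<le> s + Tp"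
    and small: "norm (x s) * \<theta> < \<rho>" and t: "t \<in> {s..s'}"
  shows "norm (x t) \<le> \<theta> * norm (x s) \<and> x t \<in> cball 0 \<rho>"
proof -
  have exp_le: "exp (L * (r - s)) \<le> \<theta>" if "r \<le> s'" for r
    using that s L_nonneg by (auto simp: \<theta>_def intro: mult_left_mono)
  have "norm (x t) \<le> norm (x s) * exp (L * (t - s))"
  proof (rule integral_solution_norm_le_of_lipschitz[OF sol _ _ _ t])
    show "\<And>\<tau>. \<tau> \<in> {s..s'} \<Longrightarrow> L-lipschitz_on (cball 0 \<rho>) (F \<tau>)"
      using s by (intro F_lip) auto
    show "\<And>\<tau>. \<tau> \<in> {s..s'} \<Longrightarrow> F \<tau> 0 = 0" using s by (intro F_zero) auto
    show "norm (x s) * exp (L * (s' - s)) < \<rho>"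
      using small exp_le[of s'] by (meson mult_left_mono norm_ge_zero order.refl le_less_trans)
  qed
  also have "\<dots> \<le> \<theta> * norm (x s)"
    using mult_left_mono[OF exp_le[of t] norm_ge_zero[of "x s"]] t by (simp add: mult.commute)
  finally show ?thesis using small by (simp add: mult.commute)
qed

lemma sample_step:
  assumes sol: "integral_solution F x s (s + Tp)" and s: "s = real m * Tp"
    and small: "norm (x s) * \<theta> < \<rho>"
  shows "x (s + Tp) = \<phi> (x s) Tp"
proof -
  have "norm (x s) \<le> norm (x s) * \<theta>" using one_le_\<theta> by (simp add: mult_le_cancel_left1)
  then have xs_B: "x s \<in> B" using small \<rho>_B by auto
  define z where "z t = \<phi> (x s) (t - s)" for t
  have z_sol: "integral_solution F z s (s + Tp)"
    unfolding z_def by (rule phi_shifted_solution[OF xs_B s])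
  have z_s: "z s = x s" by (simp add: z_def phi_start[OF xs_B])
  have s0: "0 \<le> s" using s Tp by simp
  show ?thesis
  proof -
    have "x (s + Tp) = z (s + Tp)"
    proof (rule integral_solution_unique[OF sol z_sol])
      show "\<And>\<tau>. \<tau> \<in> {s..s + Tp} \<Longrightarrow> L-lipschitz_on (cball 0 \<rho>) (F \<tau>)"
        using s0 by (intro F_lip) auto
      show "\<And>\<tau>. \<tau> \<in> {s..s + Tp} \<Longrightarrow> x \<tau> \<in> cball 0 \<rho>"
        using norm_le_within_period[OF sol s0 _ _ small] Tp by auto
      show "\<And>\<tau>. \<tau> \<in> {s..s + Tp} \<Longrightarrow> z \<tau> \<in> cball 0 \<rho>"
        using norm_le_within_period[OF z_sol s0 _ _ small[folded z_s]] Tp by auto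
    qed (use z_s Tp in auto)
    then show ?thesis by (simp add: z_def)
  qed
qed

lemma samples_decay:
  assumes sol: "integral_solution F x s t1" and s: "s = real m * Tp"
    and xs_B: "x s \<in> B" and small: "\<kappa> * \<theta> * norm (x s) < \<rho>"
  shows "s + real j * Tp \<le> t1 \<Longrightarrow> x (s + real j * Tp) \<in> B \<and> V (x (s + real j * Tp)) \<le> c ^ j * V (x s)"
proof (induction j)
  case 0 show ?case using xs_B by simp
next
  case (Suc j)
  define s' where "s' = s + real j * Tp"
  have s'_end: "s' + Tp \<le> t1" using Suc.prems by (simp add: s'_def algebra_simps)
  then have IH: "x s' \<in> B" "V (x s') \<le> c ^ j * V (x s)"
    using Suc.IH Tp by (auto simp: s'_def)
  have "norm (x s') \<le> \<kappa> * exp (- rate * (real j * Tp)) * norm (x s)"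
    by (rule norm_le_of_V_le[OF IH(1) xs_B IH(2)])
  also have "\<dots> \<le> \<kappa> * norm (x s)"
    using rate_pos Tp one_le_\<kappa> by (intro mult_right_mono) (auto simp: mult_nonneg_nonneg)
  finally have "norm (x s') * \<theta> < \<rho>"
    using small one_le_\<theta> by (smt (verit, best) mult_right_mono mult.commute mult.left_commute)
  moreover have "integral_solution F x s' (s' + Tp)"
    using s'_end Tp s by (intro integral_solution_subinterval[OF sol]) (auto simp: s'_def)
  moreover have "s' = real (m + j) * Tp" by (simp add: s'_def s algebra_simps)
  ultimately have "x (s' + Tp) = \<phi> (x s') Tp" by (metis sample_step)
  moreover have "c * V (x s') \<le> c * (c ^ j * V (x s))" using IH(2) c by (intro mult_left_mono) auto
  ultimately show ?case
    using \<phi>_end[OF IH(1)] by (auto simp: s'_def algebra_simps)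
qed

lemma estimate_from_sample:
  assumes sol: "integral_solution F x s t1" and s: "s = real m * Tp"
    and xs_B: "x s \<in> B" and small: "\<kappa> * \<theta> * norm (x s) < \<rho>" and t: "t \<in> {s..t1}"
  shows "norm (x t) \<le> \<theta> * \<kappa> * exp (rate * Tp) * exp (- rate * (t - s)) * norm (x s)"
proof -
  have s0: "0 \<le> s" using s Tp by simp
  have "0 \<le> t - s" using t by simp
  then obtain j r where tj: "t - s = r + real j * Tp" "0 \<le> r" "r < Tp"
    using real_period_decomposition[OF _ Tp] by metis
  define s' where "s' = s + real j * Tp"
  have s't: "s' \<le> t" "t < s' + Tp" using tj by (auto simp: s'_def)
  have decay: "x s' \<in> B" "V (x s') \<le> c ^ j * V (x s)"
    using samples_decay[OF sol s xs_B small, of j] s't t by (auto simp: s'_def)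
  have norm_s': "norm (x s') \<le> \<kappa> * exp (- rate * (real j * Tp)) * norm (x s)"
    by (rule norm_le_of_V_le[OF decay(1) xs_B decay(2)])
  also have "\<dots> \<le> \<kappa> * norm (x s)"
    using rate_pos Tp one_le_\<kappa> by (intro mult_right_mono) (auto simp: mult_nonneg_nonneg)
  finally have "norm (x s') * \<theta> < \<rho>"
    using small one_le_\<theta> by (smt (verit, best) mult_right_mono mult.commute mult.left_commute)
  then have "norm (x t) \<le> \<theta> * norm (x s')"
    using s't t s0 Tp
    by (intro norm_le_within_period[where s' = "min t1 (s' + Tp)", THEN conjunct1]
        integral_solution_subinterval[OF sol]) (auto simp: s'_def)
  also have "\<dots> \<le> \<theta> * (\<kappa> * exp (- rate * (real j * Tp)) * norm (x s))"
    using norm_s' one_le_\<theta> by simp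
  also have "exp (- rate * (real j * Tp)) \<le> exp (rate * Tp) * exp (- rate * (t - s))"
    using tj rate_pos by (simp add: algebra_simps flip: exp_add)
  then have "\<theta> * (\<kappa> * exp (- rate * (real j * Tp)) * norm (x s))
      \<le> \<theta> * (\<kappa> * (exp (rate * Tp) * exp (- rate * (t - s))) * norm (x s))"
    using one_le_\<theta> one_le_\<kappa> by (intro mult_left_mono mult_right_mono) auto
  finally show ?thesis by (simp add: algebra_simps)
qed

lemma \<theta>_le_\<kappa>\<theta>\<theta>: "\<theta> \<le> \<kappa> * \<theta> * \<theta>"
  using mult_right_mono[OF one_le_\<kappa>\<theta>, of \<theta>] one_le_\<theta> by simp

lemma \<kappa>\<theta>\<theta>_norm_less: "norm \<xi> < \<delta> \<Longrightarrow> \<kappa> * \<theta> * \<theta> * norm \<xi> < \<rho>"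
  using mult_strict_left_mono[of "norm \<xi>" \<delta> "\<kappa> * \<theta> * \<theta>"] \<kappa>\<theta>\<theta>_\<delta> one_le_\<kappa>\<theta> one_le_\<theta> by simp

lemma \<theta>_le_K_exp:
  assumes "r \<le> Tp"
  shows "\<theta> \<le> K * exp (- rate * r)"
proof -
  have "rate * r \<le> 2 * rate * Tp" using assms rate_pos Tp by (simp add: mult_left_mono)
  then have "1 \<le> exp (2 * rate * Tp) * exp (- rate * r)" by (simp flip: exp_add)
  moreover have "0 \<le> \<kappa> * \<theta> * \<theta>" using one_le_\<kappa>\<theta> one_le_\<theta> by simp
  ultimately have "\<kappa> * \<theta> * \<theta> * 1 \<le> \<kappa> * \<theta> * \<theta> * (exp (2 * rate * Tp) * exp (- rate * r))"
    by (rule mult_left_mono)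
  then have "\<kappa> * \<theta> * \<theta> \<le> K * exp (- rate * r)" by (simp add: K_def mult.assoc)
  with \<theta>_le_\<kappa>\<theta>\<theta> show ?thesis by linarith
qed

lemma exponential_estimate:
  assumes t0: "0 \<le> t0" and sol: "integral_solution F x t0 t1" and small: "norm (x t0) < \<delta>"
    and t: "t \<in> {t0..t1}"
  shows "norm (x t) \<le> K * norm (x t0) * exp (- rate * (t - t0))"
proof -
  obtain m where T1: "t0 \<le> real m * Tp" "real m * Tp < t0 + Tp" using next_multiple[OF t0 Tp] .
  define T1 where "T1 = real m * Tp"
  have "norm (x t0) * \<theta> \<le> \<kappa> * \<theta> * \<theta> * norm (x t0)"
    using mult_left_mono[OF \<theta>_le_\<kappa>\<theta>\<theta> norm_ge_zero[of "x t0"]] by (simp add: algebra_simps)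
  then have small0: "norm (x t0) * \<theta> < \<rho>" using \<kappa>\<theta>\<theta>_norm_less[OF small] by linarith
  have first: "norm (x \<tau>) \<le> \<theta> * norm (x t0) \<and> x \<tau> \<in> cball 0 \<rho>"
    if "\<tau> \<in> {t0..min t1 T1}" for \<tau>
    using that t T1 small0
    by (intro norm_le_within_period[OF integral_solution_subinterval[OF sol] t0]) (auto simp: T1_def)
  show ?thesis
  proof (cases "t \<le> T1")
    case True
    have "\<theta> * norm (x t0) \<le> K * exp (- rate * (t - t0)) * norm (x t0)"
      using True T1 by (intro mult_right_mono \<theta>_le_K_exp) (auto simp: T1_def)
    then show ?thesis using first[of t] t True by (simp add: algebra_simps)
  next
    case False
    have xT1: "norm (x T1) \<le> \<theta> * norm (x t0)" "x T1 \<in> B"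
      using first[of T1] False t T1 \<rho>_B by (auto simp: T1_def)
    have "\<kappa> * \<theta> * norm (x T1) \<le> \<kappa> * \<theta> * \<theta> * norm (x t0)"
      using mult_left_mono[OF xT1(1), of "\<kappa> * \<theta>"] one_le_\<kappa>\<theta> by (simp add: mult.assoc)
    then have "\<kappa> * \<theta> * norm (x T1) < \<rho>" using \<kappa>\<theta>\<theta>_norm_less[OF small] by linarith
    then have "norm (x t) \<le> \<theta> * \<kappa> * exp (rate * Tp) * exp (- rate * (t - T1)) * norm (x T1)"
      using False t T1 xT1
      by (intro estimate_from_sample[OF integral_solution_subinterval[OF sol], of T1 _ m])
        (auto simp: T1_def)
    also have "\<dots> \<le> \<theta> * \<kappa> * exp (rate * Tp) * (exp (rate * Tp) * exp (- rate * (t - t0)))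
        * (\<theta> * norm (x t0))"
    proof (intro mult_mono order.refl xT1(1))
      have "rate * (T1 - t0) \<le> rate * Tp" using T1 rate_pos by (intro mult_left_mono) (auto simp: T1_def)
      then show "exp (- rate * (t - T1)) \<le> exp (rate * Tp) * exp (- rate * (t - t0))"
        by (simp add: algebra_simps flip: exp_add)
    qed (use one_le_\<theta> one_le_\<kappa> in auto)
    also have "\<dots> = K * norm (x t0) * exp (- rate * (t - t0))"
      by (simp add: K_def algebra_simps flip: exp_add)
    finally show ?thesis .
  qed
qed

lemma cl_solution_exists_within_period:
  assumes t0: "0 \<le> t0" "t0 \<le> T" "T \<le> t0 + Tp" and x0: "norm x0 * \<theta> \<le> \<rho>"
  obtains \<psi> where "\<psi> t0 = x0" "cl_solution f \<mu> Be \<psi> t0 T" "\<psi> T \<in> B"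
proof -
  have \<rho>_Be: "cball 0 \<rho> \<subseteq> Be" using \<rho>_B B_Be by auto
  have F_bound: "norm (F \<tau> x) \<le> L * \<rho>" if "0 \<le> \<tau>" "x \<in> cball 0 \<rho>" for \<tau> x
  proof -
    have "norm (F \<tau> x) \<le> L * norm x"
      using that \<rho>_pos by (intro norm_le_of_lipschitz_zero[OF F_lip F_zero]) auto
    also have "\<dots> \<le> L * \<rho>" using that L_nonneg by (intro mult_left_mono) auto
    finally show ?thesis .
  qed
  have exp_le: "norm x0 * exp (L * (t - t0)) \<le> norm x0 * \<theta>" if "t \<le> T" for t
    using that t0 L_nonneg by (auto simp: \<theta>_def intro!: mult_left_mono)
  obtain \<psi> where \<psi>_t0: "\<psi> t0 = x0" and \<psi>_sol: "integral_solution F \<psi> t0 T"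
    and \<psi>_tube: "\<And>t. t \<in> {t0..T} \<Longrightarrow> norm (\<psi> t) \<le> norm x0 * exp (L * (t - t0))"
    using integral_solution_exists[of t0 T L \<rho> F x0] t0 x0 exp_le[of T] F_lip F_zero
      F_integrable[OF _ _ _ \<rho>_Be F_bound] by auto
  have \<psi>_in: "\<psi> t \<in> cball 0 \<rho>" if "t \<in> {t0..T}" for t
    using \<psi>_tube[OF that] exp_le[of t] that x0 by simp
  have "cl_solution f \<mu> Be \<psi> t0 T" using \<psi>_sol \<psi>_in \<rho>_Be by (auto simp: cl_solution_iff)
  moreover have "\<psi> T \<in> B" using \<psi>_in[of T] t0 \<rho>_B by auto
  ultimately show thesis using \<psi>_t0 that by blast
qed

lemma cl_solution_exists:
  assumes t0: "0 \<le> t0" and x0: "norm x0 * \<theta> \<le> \<rho>"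
  shows "\<exists>x. x t0 = x0 \<and> (\<forall>t1\<ge>t0. cl_solution f \<mu> Be x t0 t1)"
proof -
  obtain m where T1: "t0 \<le> real m * Tp" "real m * Tp < t0 + Tp" using next_multiple[OF t0 Tp] .
  define T1 where "T1 = real m * Tp"
  have T1_le: "t0 \<le> T1" "T1 \<le> t0 + Tp" using T1 by (simp_all add: T1_def)
  obtain \<psi> where \<psi>_t0: "\<psi> t0 = x0" and \<psi>_cl: "cl_solution f \<mu> Be \<psi> t0 T1" and \<psi>_T1: "\<psi> T1 \<in> B"
    using cl_solution_exists_within_period[OF t0 T1_le x0] by blast
  obtain y where y_T1: "y T1 = \<psi> T1" and y_cl: "\<And>t1. T1 \<le> t1 \<Longrightarrow> cl_solution f \<mu> Be y T1 t1"
    using cl_solution_from_sample[OF \<psi>_T1, of T1 m] by (auto simp: T1_def)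
  define x where "x t = (if t \<le> T1 then \<psi> t else y t)" for t
  have "cl_solution f \<mu> Be x t0 t1" if "t0 \<le> t1" for t1
  proof -
    have "cl_solution f \<mu> Be y T1 (max t1 T1)" by (rule y_cl) simp
    from cl_solution_glue[OF \<psi>_cl this] y_T1 T1_le
    have "cl_solution f \<mu> Be x t0 (max t1 T1)" unfolding x_def by simp
    then show ?thesis by (rule cl_solution_subinterval) (use that in auto)
  qed
  moreover have "x t0 = x0" using T1 \<psi>_t0 by (simp add: x_def T1_def)
  ultimately show ?thesis by blast
qed

lemma loc_exp_stable: "cl_loc_exp_stable f \<mu> Be"
  unfolding cl_loc_exp_stable_def
proof (rule exI[of _ \<delta>], rule conjI[OF \<delta>_pos], rule exI[of _ K], rule conjI[OF K_pos],
    rule exI[of _ rate], rule conjI[OF rate_pos], intro allI impI conjI ballI)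
  fix t0 :: real and x0 :: 'a assume t0: "0 \<le> t0" and "norm x0 < \<delta>"
  then have "norm x0 * \<theta> \<le> \<delta> * \<theta>" using one_le_\<theta> by (intro mult_right_mono) auto
  then have "norm x0 * \<theta> \<le> \<rho>" using \<delta>_\<theta>_le by linarith
  then show "\<exists>x. x t0 = x0 \<and> (\<forall>t1\<ge>t0. cl_solution f \<mu> Be x t0 t1)"
    by (rule cl_solution_exists[OF t0])
next
  fix t0 :: real and x :: "real \<Rightarrow> 'a" and t1 t :: real
  assume "0 \<le> t0" "cl_solution f \<mu> Be x t0 t1 \<and> norm (x t0) < \<delta>" "t \<in> {t0..t1}"
  then show "norm (x t) \<le> K * norm (x t0) * exp (- rate * (t - t0))"
    using exponential_estimate by (auto simp: cl_solution_iff)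
qed

end

lemma (in periodic_feedback) cl_loc_exp_stable: "cl_loc_exp_stable f \<mu> Be"
proof -
  obtain \<rho> L where "0 < \<rho>" "cball 0 \<rho> \<subseteq> B" "\<And>t. 0 \<le> t \<Longrightarrow> L-lipschitz_on (cball 0 \<rho>) (F t)"
    by (rule F_lipschitz_near_origin) blast
  then interpret periodic_feedback_near_origin f Tp B Be V \<alpha>1 \<alpha>2 c u \<phi> \<mu> \<rho> L
    by unfold_locales auto
  show ?thesis by (rule loc_exp_stable)
qed

theorem proposition1:
  fixes f :: "real \<Rightarrow> 'a::euclidean_space \<Rightarrow> 'b::euclidean_space \<Rightarrow> 'a"
    and Tp :: real and B Be :: "'a set" and V :: "'a \<Rightarrow> real"
    and \<alpha>1 \<alpha>2 c :: real
    and u :: "'a \<Rightarrow> real \<Rightarrow> 'b" and \<phi> :: "'a \<Rightarrow> real \<Rightarrow> 'a"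
    and \<mu> :: "real \<Rightarrow> 'a \<Rightarrow> 'b"
  assumes Tp: "Tp > 0"
    (* A1 *)
    and f_lip: "loc_lipschitz_in_x UNIV (\<lambda>t z. f t (fst z) (snd z))"
    and f_pw: "\<And>x w. pw_continuous_nonneg (\<lambda>t. f t x w)"
    and f_per: "\<And>t x w. t \<ge> 0 \<Longrightarrow> f (t + Tp) x w = f t x w"
    (* A2 *)
    and f_eq: "\<And>t. t \<ge> 0 \<Longrightarrow> f t 0 0 = 0"
    (* A3 *)
    and B_ball: "\<exists>r>0. B = ball 0 r"
    and V0: "V 0 = 0" and Vpos: "\<And>x. x \<in> B \<Longrightarrow> x \<noteq> 0 \<Longrightarrow> V x > 0"
    and V_lip: "loc_lipschitz_on B V"
    and \<alpha>: "0 < \<alpha>1" "\<alpha>1 \<le> \<alpha>2"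
    and V_bounds: "\<And>x. x \<in> B \<Longrightarrow> \<alpha>1 * (x \<bullet> x) \<le> V x \<and> V x \<le> \<alpha>2 * (x \<bullet> x)"
    (* A4 *)
    and c: "0 \<le> c" "c < 1"
    and u_cont: "\<And>\<xi>. \<xi> \<in> B \<Longrightarrow> continuous_on {0..Tp} (u \<xi>)"
    and \<phi>_sol: "\<And>\<xi> t. \<xi> \<in> B \<Longrightarrow> t \<in> {0..Tp} \<Longrightarrow>
        ((\<lambda>\<tau>. f \<tau> (\<phi> \<xi> \<tau>) (u \<xi> \<tau>)) has_integral (\<phi> \<xi> t - \<xi>)) {0..t}"
    and \<phi>_end: "\<And>\<xi>. \<xi> \<in> B \<Longrightarrow> \<phi> \<xi> Tp \<in> B \<and> V (\<phi> \<xi> Tp) \<le> c * V \<xi>"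
    and u0: "\<And>t. t \<in> {0..Tp} \<Longrightarrow> u 0 t = 0"
    (* feedback \<mu> *)
    and Be: "open Be" "B \<subseteq> Be"
    and \<mu>_pw: "\<And>x. x \<in> Be \<Longrightarrow> pw_continuous_nonneg (\<lambda>t. \<mu> t x)"
    and \<mu>_per: "\<And>t x. t \<ge> 0 \<Longrightarrow> x \<in> Be \<Longrightarrow> \<mu> (t + Tp) x = \<mu> t x"
    and \<mu>_lip: "loc_lipschitz_in_x Be \<mu>"
    and \<mu>_\<phi>: "\<And>\<xi> t. \<xi> \<in> B \<Longrightarrow> t \<in> {0..<Tp} \<Longrightarrow> \<phi> \<xi> t \<in> Be \<and> \<mu> t (\<phi> \<xi> t) = u \<xi> t"
  shows "cl_loc_exp_stable f \<mu> Be \<and> (\<forall>\<xi>\<in>B. cl_solution f \<mu> Be (\<phi> \<xi>) 0 Tp)"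
proof -
  interpret periodic_feedback f Tp B Be V \<alpha>1 \<alpha>2 c u \<phi> \<mu>
    by (rule periodic_feedback.intro) (fact assms)+
  show ?thesis using cl_loc_exp_stable cl_solution_phi by blast
qed

end
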